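(* (1) Let $\mu\in(\mathbb Z^n_{\ge0})_+$ and $n\ge b\ge a\ge\ell(\mu)$. Let $E\in B(\varpi_a)$, $F\in B(\varpi_b)$ with $E\otimes T^0_\mu$ semistandard, and let $j\in[n-1]$ with $j\notin E$, $j+1\in E$. Then $$\Psi_{F\otimes E\otimes T^0_\mu}=\begin{cases}tT_j^{-1}\Psi_{s_jF\otimes s_jE\otimes T^0_\mu},& s_jF\le F,\\ T_j\Psi_{s_jF\otimes s_jE\otimes T^0_\mu}+(1-t)\Psi_{F\otimes s_jE\otimes T^0_\mu},& s_jF\ge F.\end{cases}$$ (2) Let $n\ge b\ge a\ge1$, $E\in B(\varpi_a)$, $F\in B(\varpi_b)$, and $j\in[n-1]$ with $s_jE\le E$. Then $$\Psi_{F\otimes E}=\begin{cases}tT_j^{-1}\Psi_{s_jF\otimes s_jE},& s_jF\le F,\\ T_j\Psi_{s_jF\otimes s_jE}+(1-t)\Psi_{F\otimes s_jE},& s_jF\ge F.\end{cases}$$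
   Context: Fix $n\ge1$, $[n]=\{1,\dots,n\}$. $S_n$ with simple transpositions $s_i$ and length $\ell(\cdot)$ acts on $\mathbb Z^n$ by permuting coordinates; $\varpi_k=\varepsilon_1+\dots+\varepsilon_k$. $(\mathbb Z^n_{\ge0})_+=\{\mu\in\mathbb Z^n_{\ge0}:\mu_1\ge\dots\ge\mu_n\}$, $\ell(\mu)$ = number of nonzero parts; $S_{n,\lambda}$ the stabilizer. The affine Hecke algebra $H$ is the $\mathbb Z[t^{\pm1}]$-algebra with generators $T_1,\dots,T_{n-1},X_1^{\pm1},\dots,X_n^{\pm1}$ and relations $T_i^2=(t-1)T_i+t$, $T_iT_{i+1}T_i=T_{i+1}T_iT_{i+1}$, $T_iT_j=T_jT_i$ ($|i-j|>1$), $X_iX_j=X_jX_i$, $T_iX_iT_i=tX_{i+1}$, $T_iX_j=X_jT_i$ ($j\notin\{i,i+1\}$). $T_w$ via reduced words; $H_n=\mathrm{span}\{T_w\}$, $H_{n,\lambda}=\mathrm{span}\{T_w:w\in S_{n,\lambda}\}$, $\mathbf 1_\lambda=\sum_{w\in S_{n,\lambda}}T_w$. Columns: $B(\varpi_\ell)$ is the set of $C=(c_1<\dots<c_\ell)\subseteq[n]$; order $E\le F$ iff $e_i\le f_i$ for all $i$; $s_jC$ is the column whose underlying set is the image of $C$ under $(j,j+1)$; $u_C\in S_n$ sends $k\mapsto c_k$ ($k\le\ell$) and $\ell+1,\dots,n$ increasingly onto $[n]\setminus C$. Tensors of columns with weakly decreasing lengths from left to right are fillings of Young diagrams; semistandard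 means rows weakly increase left to right. $T^0_\mu$ is the tableau of shape $\mu$ with row $i$ filled by $i$. $\Psi$: each $h\in H_n$ is uniquely $\sum_{F\in B(\varpi_\ell)}T_{u_F}h_F$, $h_F\in H_{n,\varpi_\ell}$. $\Psi_C=t^{\ell(u_C)}(T_{u_C^{-1}})^{-1}\mathbf 1_{\varpi_\ell}$ for $C\in B(\varpi_\ell)$; for $T=C\otimes S$ ($C\in B(\varpi_\ell)$, $S$ with columns of length $\le\ell$), write $\Psi_S=\sum_ET_{u_E}h_{E,S}$ ($h_{E,S}\in H_{n,\varpi_\ell}$) and set $\Psi_T=t^{\ell(u_C)}(T_{u_C^{-1}})^{-1}h_{C,S}$. *)

theory Defs
  imports "HOL-Combinatorics.Combinatorics"
begin

(* Permutations of [n] are functions nat => nat permuting {1..n} (fixing everything else).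
   Elements of the finite Hecke algebra H_n over a commutative ring with an invertible
   parameter t are coefficient functions h : perm => 'a, h = sum_w h(w) T_w,
   supported on S_n. *)

type_synonym perm = "nat \<Rightarrow> nat"
type_synonym 'a hecke = "perm \<Rightarrow> 'a"

definition Sn :: "nat \<Rightarrow> perm set" where
  "Sn n = {w. w permutes {1..n}}"

definition sref :: "nat \<Rightarrow> perm" where
  "sref i = Transposition.transpose i (Suc i)"

definition plen :: "nat \<Rightarrow> perm \<Rightarrow> nat" where
  "plen n w = card {(i, j). 1 \<le> i \<and> i < j \<and> j \<le> n \<and> w j < w i}"

definition redword :: "nat \<Rightarrow> perm \<Rightarrow> nat list" where
  "redword n w = (SOME is. set is \<subseteq> {1..<n} \<and> length is = plen n w \<and>
                     foldr (\<lambda>i f. sref i \<circ> f) is id = w)"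

definition hT :: "perm \<Rightarrow> 'a::comm_ring_1 hecke" where
  "hT w = (\<lambda>u. if u = w then 1 else 0)"

definition hone :: "'a::comm_ring_1 hecke" where
  "hone = hT id"

definition Hn :: "nat \<Rightarrow> 'a::comm_ring_1 hecke set" where
  "Hn n = {h. \<forall>w. w \<notin> Sn n \<longrightarrow> h w = 0}"

(* left multiplication by T_{s_i}:
   T_i T_u = T_{s_i u} if l(s_i u) > l(u), and (t-1) T_u + t T_{s_i u} otherwise *)
definition hgen :: "nat \<Rightarrow> 'a::comm_ring_1 \<Rightarrow> nat \<Rightarrow> 'a hecke \<Rightarrow> 'a hecke" where
  "hgen n t i v = (\<lambda>w. if plen n (sref i \<circ> w) < plen n w
                        then v (sref i \<circ> w) + (t - 1) * v w
                        else t * v (sref i \<circ> w))"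

definition hop :: "nat \<Rightarrow> 'a::comm_ring_1 \<Rightarrow> perm \<Rightarrow> 'a hecke \<Rightarrow> 'a hecke" where
  "hop n t w v = foldr (hgen n t) (redword n w) v"

definition hmul :: "nat \<Rightarrow> 'a::comm_ring_1 \<Rightarrow> 'a hecke \<Rightarrow> 'a hecke \<Rightarrow> 'a hecke" where
  "hmul n t h v = (\<lambda>x. \<Sum>w\<in>Sn n. h w * hop n t w v x)"

definition hinv :: "nat \<Rightarrow> 'a::comm_ring_1 \<Rightarrow> 'a hecke \<Rightarrow> 'a hecke" where
  "hinv n t h = (THE g. g \<in> Hn n \<and> hmul n t h g = hone \<and> hmul n t g h = hone)"

(* stabilizer S_{n,varpi_l} of varpi_l = e_1 + ... + e_l *)
definition Stab :: "nat \<Rightarrow> nat \<Rightarrow> perm set" where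
  "Stab n l = {w \<in> Sn n. w ` {1..l} = {1..l}}"

definition Hsub :: "nat \<Rightarrow> nat \<Rightarrow> 'a::comm_ring_1 hecke set" where
  "Hsub n l = {h. \<forall>w. w \<notin> Stab n l \<longrightarrow> h w = 0}"

definition one_l :: "nat \<Rightarrow> nat \<Rightarrow> 'a::comm_ring_1 hecke" where
  "one_l n l = (\<lambda>w. if w \<in> Stab n l then 1 else 0)"

(* columns: B(varpi_l), a column C = (c_1 < ... < c_l) is a strictly increasing list *)
definition cols :: "nat \<Rightarrow> nat \<Rightarrow> nat list set" where
  "cols n l = {C. sorted_wrt (<) C \<and> length C = l \<and> set C \<subseteq> {1..n}}"

definition cle :: "nat list \<Rightarrow> nat list \<Rightarrow> bool" where
  "cle E F \<longleftrightarrow> length E = length F \<and> (\<forall>i<length E. E ! i \<le> F ! i)"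

definition scol :: "nat \<Rightarrow> nat list \<Rightarrow> nat list" where
  "scol j C = sorted_list_of_set (sref j ` set C)"

definition ucol :: "nat \<Rightarrow> nat list \<Rightarrow> perm" where
  "ucol n C = (\<lambda>k. if 1 \<le> k \<and> k \<le> length C then C ! (k - 1)
                   else if length C < k \<and> k \<le> n
                   then sorted_list_of_set ({1..n} - set C) ! (k - length C - 1)
                   else k)"

definition hdec :: "nat \<Rightarrow> 'a::comm_ring_1 \<Rightarrow> nat \<Rightarrow> 'a hecke \<Rightarrow> nat list \<Rightarrow> 'a hecke" where
  "hdec n t l h = (THE f. (\<forall>F. F \<notin> cols n l \<longrightarrow> f F = (\<lambda>_. 0)) \<and>
                          (\<forall>F\<in>cols n l. f F \<in> Hsub n l) \<and>
                          (\<forall>x. h x = (\<Sum>F\<in>cols n l. hmul n t (hT (ucol n F)) (f F) x)))"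

(* Psi on tensors of columns C_1 (x) C_2 (x) ... (x) C_m (lists of columns, leftmost first) *)
fun Psi :: "nat \<Rightarrow> 'a::comm_ring_1 \<Rightarrow> nat list list \<Rightarrow> 'a hecke" where
  "Psi n t [] = (\<lambda>_. 0)"
| "Psi n t [C] = (\<lambda>x. t ^ plen n (ucol n C) *
      hmul n t (hinv n t (hT (inv (ucol n C)))) (one_l n (length C)) x)"
| "Psi n t (C # D # S) = (\<lambda>x. t ^ plen n (ucol n C) *
      hmul n t (hinv n t (hT (inv (ucol n C)))) (hdec n t (length C) (Psi n t (D # S)) C) x)"

definition dominant :: "nat \<Rightarrow> nat list \<Rightarrow> bool" where
  "dominant n mu \<longleftrightarrow> length mu = n \<and> sorted_wrt (\<ge>) mu"

definition lenpart :: "nat list \<Rightarrow> nat" where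
  "lenpart mu = length (filter (\<lambda>x. x \<noteq> 0) mu)"

(* T^0_mu as a list of columns: column k = {1, ..., mu'_k} *)
definition T0 :: "nat \<Rightarrow> nat list \<Rightarrow> nat list list" where
  "T0 n mu = map (\<lambda>k. [1..<Suc (card {i. i < n \<and> k \<le> mu ! i})])
                 [1..<Suc (Max (insert 0 (set mu)))]"

definition semistandard :: "nat list list \<Rightarrow> bool" where
  "semistandard cs \<longleftrightarrow> (\<forall>k. Suc k < length cs \<longrightarrow>
      length (cs ! Suc k) \<le> length (cs ! k) \<and>
      (\<forall>r < length (cs ! Suc k). cs ! k ! r \<le> cs ! Suc k ! r))"

end

theory Submission
  imports Defs
begin

text \<open>
  \<open>\<Psi>\<close> is built one column at a time: \<open>\<Psi>\<^bsub>F \<otimes> S\<^esub>\<close> is \<open>t\<^bsup>\<ell>(u\<^sub>F)\<^esup> (T\<^bsub>u\<^sub>F\<^sup>-\<^sup>1\<^esub>)\<^sup>-\<^sup>1\<close>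
  applied to the component of \<open>\<Psi>\<^sub>S\<close> along the coset \<open>u\<^sub>F S\<^sub>n\<^sub>,\<^sub>l\<close>.  The heart of the proof is
  that a relation \<open>\<Psi>\<^bsub>E \<otimes> S\<^esub> = t T\<^sub>j\<^sup>-\<^sup>1 \<Psi>\<^bsub>s\<^sub>jE \<otimes> S\<^esub>\<close> propagates one column to the left,
  in the two forms of the proposition according to whether \<open>s\<^sub>j\<close> moves \<open>F\<close> down or up.
  This holds because \<open>T\<^sub>j\<close> acts on the components through the Hecke relations: either
  \<open>s\<^sub>j u\<^sub>F = u\<^bsub>s\<^sub>jF\<^esub>\<close> is again a minimal coset representative, or \<open>s\<^sub>j u\<^sub>F = u\<^sub>F s\<^sub>k\<close> with \<open>s\<^sub>k\<close>
  in the stabiliser.  The relation is started by a single column \<open>E\<close> with \<open>s\<^sub>jE \<le> E\<close>, or by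
  \<open>E \<otimes> T\<^sup>0\<^sub>\<mu>\<close>: semistandardness puts \<open>j\<close> beyond every column of \<open>T\<^sup>0\<^sub>\<mu>\<close>, so \<open>T\<^sub>j\<close> acts on
  \<open>\<Psi>\<^bsub>T\<^sup>0\<^sub>\<mu>\<^esub>\<close> by \<open>t\<close>.

  The Hecke algebra is given concretely by coefficient functions.  Its associativity comes from
  the fact that left and right multiplications by generators commute, so that an operator
  commuting with right multiplications is determined by its value at \<open>T\<^sub>1\<close>.
\<close>

section \<open>Inversions and descents\<close>

definition inversions :: "nat \<Rightarrow> perm \<Rightarrow> (nat \<times> nat) set" where
  "inversions n w = {(i, j). 1 \<le> i \<and> i < j \<and> j \<le> n \<and> w j < w i}"

lemma plen_eq_card_inversions: "plen n w = card (inversions n w)"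
  unfolding plen_def inversions_def by simp

lemma finite_inversions [simp]: "finite (inversions n w)"
  by (rule finite_subset[of _ "{1..n} \<times> {1..n}"]) (auto simp: inversions_def)

lemma sref_permutes: "1 \<le> i \<Longrightarrow> i < n \<Longrightarrow> sref i permutes {1..n}"
  unfolding sref_def by (rule permutes_swap_id) auto

lemma sref_comp_sref [simp]: "sref i \<circ> sref i = id"
  unfolding sref_def by simp

lemma sref_sref_apply [simp]: "sref i (sref i x) = x"
  unfolding sref_def by simp

lemma inv_sref [simp]: "inv (sref i) = sref i"
  unfolding sref_def by simp

lemma sref_eq_iff: "sref j x = sref j y \<longleftrightarrow> x = y"
  by (metis sref_sref_apply)

lemma sref_less_sref_iff:
  assumes "x \<noteq> y"
  shows "sref i x < sref i y \<longleftrightarrow>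
    (if x = i \<and> y = Suc i then False else if x = Suc i \<and> y = i then True else x < y)"
  using assms unfolding sref_def transpose_def by auto

lemma inv_comp_sref: "w permutes S \<Longrightarrow> inv (w \<circ> sref i) = sref i \<circ> inv w"
  by (metis inv_sref o_inv_distrib permutes_bij sref_def bij_transpose)

lemma inv_sref_comp: "w permutes S \<Longrightarrow> inv (sref i \<circ> w) = inv w \<circ> sref i"
  by (metis inv_sref o_inv_distrib permutes_bij sref_def bij_transpose)

lemma plen_inv:
  assumes w: "w permutes {1..n}"
  shows "plen n (inv w) = plen n w"
proof -
  have iw: "\<And>x. inv w (w x) = x" "\<And>x. w (inv w x) = x"
    using permutes_inverses[OF w] by auto
  have rng: "\<And>x. x \<in> {1..n} \<Longrightarrow> w x \<in> {1..n}" "\<And>x. x \<in> {1..n} \<Longrightarrow> inv w x \<in> {1..n}"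
    using permutes_in_image[OF w] permutes_in_image[OF permutes_inv[OF w]] by auto
  have "bij_betw (\<lambda>(p, q). (w q, w p)) (inversions n w) (inversions n (inv w))"
    by (rule bij_betw_byWitness[where f' = "\<lambda>(a, b). (inv w b, inv w a)"])
      (use iw rng in \<open>fastforce simp: inversions_def\<close>)+
  then show ?thesis
    unfolding plen_eq_card_inversions by (simp add: bij_betw_same_card)
qed

definition ldescent :: "nat \<Rightarrow> perm \<Rightarrow> bool" where
  "ldescent i w \<longleftrightarrow> inv w (Suc i) < inv w i"

definition rdescent :: "nat \<Rightarrow> perm \<Rightarrow> bool" where
  "rdescent i w \<longleftrightarrow> w (Suc i) < w i"

lemma ldescent_inv: "w permutes S \<Longrightarrow> ldescent i (inv w) \<longleftrightarrow> rdescent i w"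
  unfolding ldescent_def rdescent_def by (simp add: permutes_inv_inv)

lemma not_ldescent_id [simp]: "\<not> ldescent i id"
  unfolding ldescent_def by simp

lemma not_rdescent_id [simp]: "\<not> rdescent i id"
  unfolding rdescent_def by simp

lemma ldescent_sref_comp:
  assumes w: "w permutes S"
  shows "ldescent i (sref i \<circ> w) \<longleftrightarrow> \<not> ldescent i w"
proof -
  have "inv w i \<noteq> inv w (Suc i)" using permutes_inj[OF permutes_inv[OF w]] by (simp add: inj_eq)
  then show ?thesis unfolding ldescent_def inv_sref_comp[OF w] by (auto simp: sref_def)
qed

lemma rdescent_comp_sref:
  assumes w: "w permutes S"
  shows "rdescent k (w \<circ> sref k) \<longleftrightarrow> \<not> rdescent k w"
proof -
  have "w k \<noteq> w (Suc k)" using permutes_inj[OF w] by (simp add: inj_eq)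
  then show ?thesis unfolding rdescent_def by (auto simp: sref_def)
qed

text \<open>Left descents at \<open>i\<close> and right descents at \<open>k\<close> interact only when \<open>w\<close> maps
  \<open>{k, k+1}\<close> onto \<open>{i, i+1}\<close>.\<close>

lemma ldescent_comp_sref:
  assumes w: "w permutes S" and c: "{w k, w (Suc k)} \<noteq> {i, Suc i}"
  shows "ldescent i (w \<circ> sref k) \<longleftrightarrow> ldescent i w"
proof -
  have ne: "inv w (Suc i) \<noteq> inv w i" using permutes_inj[OF permutes_inv[OF w]] by (simp add: inj_eq)
  have "\<not> (inv w (Suc i) = k \<and> inv w i = Suc k)" "\<not> (inv w (Suc i) = Suc k \<and> inv w i = k)"
    using c permutes_inverses(1)[OF w] by (metis insert_commute)+
  then show ?thesis unfolding ldescent_def inv_comp_sref[OF w] using sref_less_sref_iff[OF ne, of k] by simp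
qed

lemma rdescent_sref_comp:
  assumes w: "w permutes S" and c: "{w k, w (Suc k)} \<noteq> {i, Suc i}"
  shows "rdescent k (sref i \<circ> w) \<longleftrightarrow> rdescent k w"
proof -
  have ne: "w (Suc k) \<noteq> w k" using permutes_inj[OF w] by (simp add: inj_eq)
  have "\<not> (w (Suc k) = i \<and> w k = Suc i)" "\<not> (w (Suc k) = Suc i \<and> w k = i)"
    using c by (metis insert_commute)+
  then show ?thesis unfolding rdescent_def using sref_less_sref_iff[OF ne, of i] by simp
qed

lemma sref_comp_eq_comp_sref:
  assumes w: "w permutes S" and c: "{w k, w (Suc k)} = {i, Suc i}"
  shows "sref i \<circ> w = w \<circ> sref k" and "ldescent i w \<longleftrightarrow> rdescent k w"
proof -
  have inj: "w x = w y \<longleftrightarrow> x = y" for x y using permutes_inj[OF w] by (simp add: inj_eq)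
  have iw: "inv w (w x) = x" for x using permutes_inverses(2)[OF w] .
  have cases: "(w k = i \<and> w (Suc k) = Suc i) \<or> (w k = Suc i \<and> w (Suc k) = i)"
    using c by (metis doubleton_eq_iff)
  show "sref i \<circ> w = w \<circ> sref k"
  proof
    fix x
    show "(sref i \<circ> w) x = (w \<circ> sref k) x"
    proof (cases "x = k \<or> x = Suc k")
      case True
      then show ?thesis using cases by (auto simp: sref_def)
    next
      case False
      then have "w x \<noteq> i" "w x \<noteq> Suc i" using cases inj[of x k] inj[of x "Suc k"] by auto
      then show ?thesis using False by (simp add: sref_def)
    qed
  qed
  show "ldescent i w \<longleftrightarrow> rdescent k w"
    using cases iw[of k] iw[of "Suc k"] unfolding ldescent_def rdescent_def by auto
qed

lemma inversions_sref_comp: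
  assumes w: "w permutes {1..n}" and i: "1 \<le> i" "i < n"
  shows "inversions n (sref i \<circ> w) =
      (if ldescent i w then inversions n w - {(inv w (Suc i), inv w i)}
       else insert (inv w i, inv w (Suc i)) (inversions n w))"
    and "ldescent i w \<Longrightarrow> (inv w (Suc i), inv w i) \<in> inversions n w"
    and "\<not> ldescent i w \<Longrightarrow> (inv w i, inv w (Suc i)) \<notin> inversions n w"
proof -
  have iw: "\<And>x. inv w (w x) = x" "\<And>x. w (inv w x) = x"
    using permutes_inverses[OF w] by auto
  define P where "P = inv w i"
  define Q where "Q = inv w (Suc i)"
  have PQ: "P \<in> {1..n}" "Q \<in> {1..n}" "P \<noteq> Q" "w P = i" "w Q = Suc i"
    using permutes_in_image[OF permutes_inv[OF w]] i iw unfolding P_def Q_def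
    by (auto, metis n_not_Suc_n)
  have injw: "\<And>x y. w x = w y \<Longrightarrow> x = y" by (metis iw(1))
  \<comment> \<open>Composing with \<open>s\<^sub>i\<close> on the left only changes the relative order of the positions \<open>P, Q\<close> of \<open>i, i+1\<close>.\<close>
  have key: "(p, q) \<in> inversions n (sref i \<circ> w) \<longleftrightarrow> 1 \<le> p \<and> q \<le> n \<and>
      (if q = P \<and> p = Q then False else if q = Q \<and> p = P then True else w q < w p)"
    if "p < q" for p q
  proof -
    have "w q \<noteq> w p" using that injw by fastforce
    then show ?thesis
      unfolding inversions_def using sref_less_sref_iff[of "w q" "w p" i] PQ injw that
      by (auto simp: iw)
  qed
  have desc: "ldescent i w \<longleftrightarrow> Q < P" unfolding ldescent_def P_def Q_def ..
  have "inversions n (sref i \<circ> w) =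
      (if Q < P then inversions n w - {(Q, P)} else insert (P, Q) (inversions n w))"
  proof (rule set_eqI)
    fix z show "z \<in> inversions n (sref i \<circ> w) \<longleftrightarrow>
        z \<in> (if Q < P then inversions n w - {(Q, P)} else insert (P, Q) (inversions n w))"
    proof (cases z)
      case (Pair p q)
      show ?thesis
      proof (cases "p < q")
        case True
        then show ?thesis using key[OF True] PQ by (cases "Q < P") (auto simp: Pair inversions_def)
      qed (use PQ in \<open>auto simp: Pair inversions_def\<close>)
    qed
  qed
  then show "inversions n (sref i \<circ> w) =
      (if ldescent i w then inversions n w - {(inv w (Suc i), inv w i)}
       else insert (inv w i, inv w (Suc i)) (inversions n w))"
    using desc unfolding P_def Q_def by simp
  show "ldescent i w \<Longrightarrow> (inv w (Suc i), inv w i) \<in> inversions n w"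
    and "\<not> ldescent i w \<Longrightarrow> (inv w i, inv w (Suc i)) \<notin> inversions n w"
    using PQ desc unfolding inversions_def P_def[symmetric] Q_def[symmetric] by auto
qed

lemma plen_sref_comp:
  assumes "w permutes {1..n}" "1 \<le> i" "i < n"
  shows "plen n (sref i \<circ> w) = (if ldescent i w then plen n w - 1 else Suc (plen n w))"
  using inversions_sref_comp[OF assms]
  unfolding plen_eq_card_inversions by (auto simp: card_Diff_singleton card_insert_if)

lemma plen_sref_comp_less_iff:
  assumes "w permutes {1..n}" "1 \<le> i" "i < n"
  shows "plen n (sref i \<circ> w) < plen n w \<longleftrightarrow> ldescent i w"
proof (cases "ldescent i w")
  case True
  then show ?thesis
    using inversions_sref_comp(1,2)[OF assms] card_Diff1_less[OF finite_inversions]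
    unfolding plen_eq_card_inversions by simp
next
  case False
  then show ?thesis
    using inversions_sref_comp(1,3)[OF assms] unfolding plen_eq_card_inversions by simp
qed

lemma plen_comp_sref:
  assumes w: "w permutes {1..n}" and i: "1 \<le> i" "i < n"
  shows "plen n (w \<circ> sref i) = (if rdescent i w then plen n w - 1 else Suc (plen n w))"
proof -
  have "w \<circ> sref i permutes {1..n}" using permutes_compose[OF sref_permutes[OF i] w] .
  then have "plen n (w \<circ> sref i) = plen n (sref i \<circ> inv w)"
    using plen_inv inv_comp_sref[OF w] by metis
  then show ?thesis
    using plen_sref_comp[OF permutes_inv[OF w] i] ldescent_inv[OF w] plen_inv[OF w] by simp
qed

lemma plen_pos_if_rdescent:
  assumes "w permutes {1..n}" "1 \<le> i" "i < n" "rdescent i w"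
  shows "plen n w \<noteq> 0"
  using inversions_sref_comp(2)[OF permutes_inv[OF assms(1)] assms(2,3)] assms
  unfolding plen_eq_card_inversions plen_inv[OF assms(1), symmetric, unfolded plen_eq_card_inversions]
  by (auto simp: ldescent_inv)

lemma permutes_strict_mono_eq_id:
  assumes w: "w permutes {1..n}" and inc: "\<And>k. 1 \<le> k \<Longrightarrow> k < n \<Longrightarrow> w k < w (Suc k)"
  shows "w = id"
proof
  have gap: "w a + (b - a) \<le> w b" if "1 \<le> a" "a \<le> b" "b \<le> n" for a b
    using that
  proof (induction b)
    case (Suc b)
    then show ?case using inc[of b] by (cases "a = Suc b") auto
  qed simp
  fix k show "w k = id k"
  proof (cases "k \<in> {1..n}")
    case True
    have "w 1 \<ge> 1" "w n \<le> n" using permutes_in_image[OF w, of 1] permutes_in_image[OF w, of n] True by auto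
    moreover have "w 1 + (k - 1) \<le> w k" "w k + (n - k) \<le> w n" using gap True by auto
    ultimately show ?thesis using True by auto
  qed (simp add: permutes_not_in[OF w])
qed

lemma plen_id [simp]: "plen n id = 0"
proof -
  have "inversions n id = {}" unfolding inversions_def by auto
  then show ?thesis unfolding plen_eq_card_inversions by simp
qed

lemma plen_eq_0_imp_id:
  assumes w: "w permutes {1..n}" and "plen n w = 0"
  shows "w = id"
proof (rule permutes_strict_mono_eq_id[OF w])
  fix k assume k: "1 \<le> k" "k < n"
  have "\<not> rdescent k w" using plen_pos_if_rdescent[OF w k] assms(2) by auto
  moreover have "w (Suc k) \<noteq> w k" using permutes_inj[OF w] by (metis inj_eq n_not_Suc_n)
  ultimately show "w k < w (Suc k)" unfolding rdescent_def by simp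
qed

lemma rdescent_exists:
  assumes w: "w permutes {1..n}" and "w \<noteq> id"
  obtains i where "1 \<le> i" "i < n" "rdescent i w"
proof -
  have "\<exists>i. 1 \<le> i \<and> i < n \<and> rdescent i w"
  proof (rule ccontr)
    assume "\<not> ?thesis"
    then have "w k < w (Suc k)" if "1 \<le> k" "k < n" for k
      using that permutes_inj[OF w] unfolding rdescent_def
      by (metis inj_eq linorder_neqE_nat n_not_Suc_n)
    then show False using permutes_strict_mono_eq_id[OF w] assms(2) by blast
  qed
  then show ?thesis using that by blast
qed

lemma ldescent_exists:
  assumes w: "w permutes {1..n}" and "w \<noteq> id"
  obtains i where "1 \<le> i" "i < n" "ldescent i w"
proof -
  have "inv w \<noteq> id" using assms by (metis inv_id permutes_inv_inv[OF w])
  then show ?thesis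
    using rdescent_exists[OF permutes_inv[OF w]] ldescent_inv[OF permutes_inv[OF w]]
      permutes_inv_inv[OF w] that by metis
qed

section \<open>Reduced words\<close>

definition wprod :: "nat list \<Rightarrow> perm" where
  "wprod ws = foldr (\<lambda>i f. sref i \<circ> f) ws id"

lemma wprod_Nil [simp]: "wprod [] = id"
  and wprod_Cons [simp]: "wprod (i # ws) = sref i \<circ> wprod ws"
  unfolding wprod_def by simp_all

definition reduced_word :: "nat \<Rightarrow> nat list \<Rightarrow> perm \<Rightarrow> bool" where
  "reduced_word n ws w \<longleftrightarrow> set ws \<subseteq> {1..<n} \<and> length ws = plen n w \<and> wprod ws = w"

lemma wprod_permutes: "set ws \<subseteq> {1..<n} \<Longrightarrow> wprod ws permutes {1..n}"
proof (induction ws)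
  case (Cons i ws)
  then show ?case unfolding wprod_Cons by (intro permutes_compose[OF _ sref_permutes]) auto
qed (simp add: permutes_id)

lemma reduced_word_exists:
  assumes "w permutes {1..n}"
  shows "\<exists>ws. reduced_word n ws w"
  using assms
proof (induction "plen n w" arbitrary: w)
  case 0
  then show ?case using plen_eq_0_imp_id unfolding reduced_word_def by force
next
  case (Suc m)
  then obtain i where i: "1 \<le> i" "i < n" "ldescent i w"
    using ldescent_exists[OF Suc.prems] by force
  have w': "sref i \<circ> w permutes {1..n}" using permutes_compose[OF Suc.prems sref_permutes[OF i(1,2)]] .
  have m: "plen n (sref i \<circ> w) = m" using plen_sref_comp[OF Suc.prems i(1,2)] i(3) Suc.hyps(2) by simp
  then obtain ws where "reduced_word n ws (sref i \<circ> w)" using Suc.hyps(1) w' by metis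
  then have "reduced_word n (i # ws) w"
    using i m Suc.hyps(2) unfolding reduced_word_def by (auto simp: o_assoc[symmetric])
  then show ?case by blast
qed

lemma reduced_word_redword: "w permutes {1..n} \<Longrightarrow> reduced_word n (redword n w) w"
  using reduced_word_exists[of w n] someI_ex[of "\<lambda>ws. reduced_word n ws w"]
  unfolding redword_def reduced_word_def wprod_def by simp

lemma plen_wprod_le: "set ws \<subseteq> {1..<n} \<Longrightarrow> plen n (wprod ws) \<le> length ws"
proof (induction ws)
  case (Cons i ws)
  then have "plen n (wprod ws) \<le> length ws" by simp
  moreover have "plen n (sref i \<circ> wprod ws) \<le> Suc (plen n (wprod ws))"
    using plen_sref_comp[OF wprod_permutes, of ws n i] Cons.prems by (cases "ldescent i (wprod ws)") simp_all
  ultimately show ?case by (simp only: wprod_Cons length_Cons)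
qed simp

section \<open>Left and right multiplication by the generators\<close>

lemma mem_Sn_iff: "w \<in> Sn n \<longleftrightarrow> w permutes {1..n}"
  unfolding Sn_def by simp

lemma finite_Sn [simp]: "finite (Sn n)"
  unfolding Sn_def by (rule finite_permutations) simp

lemma id_in_Sn [simp]: "id \<in> Sn n"
  unfolding Sn_def by simp

lemma sref_in_Sn: "1 \<le> i \<Longrightarrow> i < n \<Longrightarrow> sref i \<in> Sn n"
  unfolding Sn_def using sref_permutes by simp

lemma comp_in_Sn: "u \<in> Sn n \<Longrightarrow> w \<in> Sn n \<Longrightarrow> u \<circ> w \<in> Sn n"
  unfolding Sn_def by (simp add: permutes_compose)

lemma inv_in_Sn: "u \<in> Sn n \<Longrightarrow> inv u \<in> Sn n"
  unfolding Sn_def by (simp add: permutes_inv)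

lemma sref_comp_in_Sn_iff: "1 \<le> i \<Longrightarrow> i < n \<Longrightarrow> sref i \<circ> w \<in> Sn n \<longleftrightarrow> w \<in> Sn n"
  using comp_in_Sn[OF sref_in_Sn, of i n] by (metis comp_assoc id_comp sref_comp_sref)

lemma comp_sref_in_Sn_iff: "1 \<le> i \<Longrightarrow> i < n \<Longrightarrow> w \<circ> sref i \<in> Sn n \<longleftrightarrow> w \<in> Sn n"
  using comp_in_Sn[OF _ sref_in_Sn, of _ n i] by (metis comp_assoc comp_id sref_comp_sref)

lemma HnD: "v \<in> Hn n \<Longrightarrow> w \<notin> Sn n \<Longrightarrow> v w = 0"
  unfolding Hn_def by auto

lemma HnI: "(\<And>w. w \<notin> Sn n \<Longrightarrow> v w = 0) \<Longrightarrow> v \<in> Hn n"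
  unfolding Hn_def by auto

lemma lincomb_in_Hn: "u \<in> Hn n \<Longrightarrow> v \<in> Hn n \<Longrightarrow> (\<lambda>x. a * u x + b * v x) \<in> Hn n"
  by (intro HnI) (simp add: HnD)

lemma smult_in_Hn: "u \<in> Hn n \<Longrightarrow> (\<lambda>x. a * u x) \<in> Hn n"
  by (intro HnI) (simp add: HnD)

lemma hT_in_Hn: "w \<in> Sn n \<Longrightarrow> hT w \<in> Hn n"
  by (rule HnI) (auto simp: hT_def)

lemma Hn_expansion: "v \<in> Hn n \<Longrightarrow> v w = (\<Sum>x\<in>Sn n. v x * hT x w)"
  by (cases "w \<in> Sn n") (auto simp: hT_def HnD if_distrib cong: if_cong)

text \<open>\<open>Lgen t i v = T\<^sub>i v\<close> and \<open>Rgen t k v = v T\<^sub>k\<close>, computed on coefficients.\<close>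

definition Lgen :: "'a::comm_ring_1 \<Rightarrow> nat \<Rightarrow> 'a hecke \<Rightarrow> 'a hecke" where
  "Lgen t i v = (\<lambda>w. if ldescent i w then v (sref i \<circ> w) + (t - 1) * v w else t * v (sref i \<circ> w))"

definition Rgen :: "'a::comm_ring_1 \<Rightarrow> nat \<Rightarrow> 'a hecke \<Rightarrow> 'a hecke" where
  "Rgen t k v = (\<lambda>w. if rdescent k w then v (w \<circ> sref k) + (t - 1) * v w else t * v (w \<circ> sref k))"

lemma hgen_eq_Lgen:
  assumes v: "v \<in> Hn n" and i: "1 \<le> i" "i < n"
  shows "hgen n t i v = Lgen t i v"
proof
  fix w show "hgen n t i v w = Lgen t i v w"
  proof (cases "w \<in> Sn n")
    case True
    then show ?thesis
      unfolding hgen_def Lgen_def using plen_sref_comp_less_iff[of w n i] i by (simp add: mem_Sn_iff)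
  next
    case False
    then show ?thesis
      unfolding hgen_def Lgen_def using HnD[OF v] sref_comp_in_Sn_iff[OF i] by simp
  qed
qed

lemma Lgen_in_Hn: "v \<in> Hn n \<Longrightarrow> 1 \<le> i \<Longrightarrow> i < n \<Longrightarrow> Lgen t i v \<in> Hn n"
  by (rule HnI) (simp add: Lgen_def HnD sref_comp_in_Sn_iff)

lemma Rgen_in_Hn: "v \<in> Hn n \<Longrightarrow> 1 \<le> i \<Longrightarrow> i < n \<Longrightarrow> Rgen t i v \<in> Hn n"
  by (rule HnI) (simp add: Rgen_def HnD comp_sref_in_Sn_iff)

lemma Lgen_hT:
  assumes p: "p \<in> Sn n" and i: "1 \<le> i" "i < n" and nd: "\<not> ldescent i p"
  shows "Lgen t i (hT p) = hT (sref i \<circ> p)"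
proof
  fix z
  have pp: "p permutes {1..n}" using p by (simp add: mem_Sn_iff)
  have "sref i \<circ> p \<noteq> p" using plen_sref_comp[OF pp i] by (metis n_not_Suc_n nd)
  moreover have "ldescent i (sref i \<circ> p)" using ldescent_sref_comp[OF pp] nd by simp
  moreover have "sref i \<circ> z = p \<longleftrightarrow> z = sref i \<circ> p" by (metis comp_assoc id_comp sref_comp_sref)
  ultimately show "Lgen t i (hT p) z = hT (sref i \<circ> p) z"
    unfolding Lgen_def hT_def using nd by auto
qed

lemma Rgen_hT:
  assumes p: "p \<in> Sn n" and i: "1 \<le> i" "i < n" and nd: "\<not> rdescent i p"
  shows "Rgen t i (hT p) = hT (p \<circ> sref i)"
proof
  fix z
  have pp: "p permutes {1..n}" using p by (simp add: mem_Sn_iff)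
  have "p \<circ> sref i \<noteq> p" using plen_comp_sref[OF pp i] by (metis n_not_Suc_n nd)
  moreover have "rdescent i (p \<circ> sref i)" using rdescent_comp_sref[OF pp] nd by simp
  moreover have "z \<circ> sref i = p \<longleftrightarrow> z = p \<circ> sref i" by (metis comp_assoc comp_id sref_comp_sref)
  ultimately show "Rgen t i (hT p) z = hT (p \<circ> sref i) z"
    unfolding Rgen_def hT_def using nd by auto
qed

lemma Lgen_Rgen_commute:
  assumes v: "v \<in> Hn n" and i: "1 \<le> i" "i < n" and k: "1 \<le> k" "k < n"
  shows "Lgen t i (Rgen t k v) = Rgen t k (Lgen t i v)"
proof
  fix w show "Lgen t i (Rgen t k v) w = Rgen t k (Lgen t i v) w"
  proof (cases "w \<in> Sn n")
    case False
    then show ?thesis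
      using HnD[OF v] sref_comp_in_Sn_iff[OF i] comp_sref_in_Sn_iff[OF k]
      unfolding Lgen_def Rgen_def by simp
  next
    case True
    then have w: "w permutes {1..n}" by (simp add: mem_Sn_iff)
    have assoc: "sref i \<circ> (w \<circ> sref k) = sref i \<circ> w \<circ> sref k" by (simp add: comp_assoc)
    show ?thesis
    proof (cases "{w k, w (Suc k)} = {i, Suc i}")
      case True
      note sc = sref_comp_eq_comp_sref[OF w True]
      define x where "x = sref i \<circ> w"
      have "rdescent k x \<longleftrightarrow> \<not> rdescent k w"
        using sc(1) rdescent_comp_sref[OF w] unfolding x_def by simp
      moreover have "ldescent i x \<longleftrightarrow> \<not> ldescent i w"
        using ldescent_sref_comp[OF w] unfolding x_def by simp
      moreover have "w \<circ> sref k = x" using sc(1) unfolding x_def by simp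
      moreover have "x \<circ> sref k = w" unfolding x_def sc(1) by (simp add: comp_assoc)
      moreover have "sref i \<circ> x = w" unfolding x_def by (simp add: comp_assoc[symmetric])
      ultimately show ?thesis
        unfolding Lgen_def Rgen_def using sc(2) x_def[symmetric] assoc
        by (cases "ldescent i w") (simp_all add: algebra_simps)
    next
      case False
      then show ?thesis
        unfolding Lgen_def Rgen_def
        using rdescent_sref_comp[OF w False] ldescent_comp_sref[OF w False] assoc
        by (cases "ldescent i w"; cases "rdescent k w"; simp add: algebra_simps)
    qed
  qed
qed

lemma Lgen_Lgen:
  assumes v: "v \<in> Hn n" and i: "1 \<le> i" "i < n"
  shows "Lgen t i (Lgen t i v) = (\<lambda>w. (t - 1) * Lgen t i v w + t * v w)"
proof
  fix w show "Lgen t i (Lgen t i v) w = (t - 1) * Lgen t i v w + t * v w"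
  proof (cases "w \<in> Sn n")
    case False
    then show ?thesis using HnD[OF v] sref_comp_in_Sn_iff[OF i] unfolding Lgen_def by simp
  next
    case True
    then show ?thesis
      unfolding Lgen_def using ldescent_sref_comp[of w "{1..n}" i]
      by (simp add: mem_Sn_iff comp_assoc[symmetric] algebra_simps)
  qed
qed

section \<open>Equivariant linear operators\<close>

definition hlinear :: "nat \<Rightarrow> ('a::comm_ring_1 hecke \<Rightarrow> 'a hecke) \<Rightarrow> bool" where
  "hlinear n A \<longleftrightarrow> (\<forall>v\<in>Hn n. A v \<in> Hn n \<and> A v = (\<lambda>w. \<Sum>x\<in>Sn n. v x * A (hT x) w))"

definition Rgen_equivariant :: "nat \<Rightarrow> 'a::comm_ring_1 \<Rightarrow> ('a hecke \<Rightarrow> 'a hecke) \<Rightarrow> bool" where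
  "Rgen_equivariant n t A \<longleftrightarrow>
     (\<forall>k v. 1 \<le> k \<longrightarrow> k < n \<longrightarrow> v \<in> Hn n \<longrightarrow> A (Rgen t k v) = Rgen t k (A v))"

lemma hlinearD:
  "hlinear n A \<Longrightarrow> v \<in> Hn n \<Longrightarrow> A v w = (\<Sum>x\<in>Sn n. v x * A (hT x) w)"
  "hlinear n A \<Longrightarrow> v \<in> Hn n \<Longrightarrow> A v \<in> Hn n"
  unfolding hlinear_def by metis+

lemma Rgen_equivariantD:
  "Rgen_equivariant n t A \<Longrightarrow> 1 \<le> k \<Longrightarrow> k < n \<Longrightarrow> v \<in> Hn n \<Longrightarrow> A (Rgen t k v) = Rgen t k (A v)"
  unfolding Rgen_equivariant_def by simp

lemma hlinear_id: "hlinear n (\<lambda>v. v)"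
  unfolding hlinear_def using Hn_expansion by blast

lemma Rgen_equivariant_id: "Rgen_equivariant n t (\<lambda>v. v)"
  unfolding Rgen_equivariant_def by simp

lemma hlinear_Lgen:
  assumes i: "1 \<le> i" "i < n"
  shows "hlinear n (Lgen t i)"
  unfolding hlinear_def
proof (intro ballI conjI ext)
  fix v :: "'a hecke" and w assume v: "v \<in> Hn n"
  show "Lgen t i v \<in> Hn n" using Lgen_in_Hn[OF v i] .
  have "(\<Sum>x\<in>Sn n. v x * Lgen t i (hT x) w) =
    (if ldescent i w
     then (\<Sum>x\<in>Sn n. v x * hT x (sref i \<circ> w)) + (t - 1) * (\<Sum>x\<in>Sn n. v x * hT x w)
     else t * (\<Sum>x\<in>Sn n. v x * hT x (sref i \<circ> w)))"
    by (simp add: Lgen_def distrib_left sum.distrib sum_distrib_left mult.left_commute)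
  then show "Lgen t i v w = (\<Sum>x\<in>Sn n. v x * Lgen t i (hT x) w)"
    using Hn_expansion[OF v, symmetric] unfolding Lgen_def by simp
qed

lemma hlinear_comp:
  assumes A: "hlinear n A" and B: "hlinear n B"
  shows "hlinear n (\<lambda>v. A (B v))"
  unfolding hlinear_def
proof (intro ballI conjI ext)
  fix v :: "'a hecke" and w assume v: "v \<in> Hn n"
  have Bv: "B v \<in> Hn n" using hlinearD(2)[OF B v] .
  show "A (B v) \<in> Hn n" using hlinearD(2)[OF A Bv] .
  have "A (B v) w = (\<Sum>y\<in>Sn n. (\<Sum>x\<in>Sn n. v x * B (hT x) y) * A (hT y) w)"
    using hlinearD(1)[OF A Bv] hlinearD(1)[OF B v] by simp
  also have "\<dots> = (\<Sum>x\<in>Sn n. v x * (\<Sum>y\<in>Sn n. B (hT x) y * A (hT y) w))"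
    unfolding sum_distrib_right sum_distrib_left mult.assoc by (rule sum.swap)
  also have "\<dots> = (\<Sum>x\<in>Sn n. v x * A (B (hT x)) w)"
    using hlinearD[OF B hT_in_Hn] hlinearD(1)[OF A] by (intro sum.cong) simp_all
  finally show "A (B v) w = (\<Sum>x\<in>Sn n. v x * A (B (hT x)) w)" .
qed

lemma Rgen_equivariant_comp:
  "Rgen_equivariant n t A \<Longrightarrow> Rgen_equivariant n t B \<Longrightarrow> hlinear n B \<Longrightarrow>
    Rgen_equivariant n t (\<lambda>v. A (B v))"
  unfolding Rgen_equivariant_def by (simp add: hlinearD(2))

lemma Rgen_equivariant_Lgen: "1 \<le> i \<Longrightarrow> i < n \<Longrightarrow> Rgen_equivariant n t (Lgen t i)"
  unfolding Rgen_equivariant_def using Lgen_Rgen_commute by blast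

lemma hlinear_lincomb:
  assumes A: "hlinear n A" and u: "u \<in> Hn n" and v: "v \<in> Hn n"
  shows "A (\<lambda>x. a * u x + b * v x) = (\<lambda>x. a * A u x + b * A v x)"
proof
  fix w
  have "A (\<lambda>x. a * u x + b * v x) w = (\<Sum>x\<in>Sn n. (a * u x + b * v x) * A (hT x) w)"
    by (rule hlinearD(1)[OF A lincomb_in_Hn[OF u v]])
  also have "\<dots> = a * (\<Sum>x\<in>Sn n. u x * A (hT x) w) + b * (\<Sum>x\<in>Sn n. v x * A (hT x) w)"
    by (simp add: sum.distrib sum_distrib_left distrib_right mult.assoc)
  finally show "A (\<lambda>x. a * u x + b * v x) w = a * A u w + b * A v w"
    using hlinearD(1)[OF A u] hlinearD(1)[OF A v] by simp
qed

lemma hlinear_smult: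
  "hlinear n A \<Longrightarrow> u \<in> Hn n \<Longrightarrow> A (\<lambda>x. a * u x) = (\<lambda>x. a * A u x)"
  using hlinear_lincomb[of n A u u a 0] by simp

lemma hlinear_Rgen_equivariant_eqI:
  assumes A: "hlinear n A" "Rgen_equivariant n t A" and B: "hlinear n B" "Rgen_equivariant n t B"
    and base: "A (hT id) = B (hT id)" and v: "v \<in> Hn n"
  shows "A v = B v"
proof -
  have basis: "A (hT x) = B (hT x)" if "x \<in> Sn n" for x
    using that
  proof (induction "plen n x" arbitrary: x rule: less_induct)
    case less
    have xp: "x permutes {1..n}" using less.prems by (simp add: mem_Sn_iff)
    show ?case
    proof (cases "x = id")
      case False
      obtain k where k: "1 \<le> k" "k < n" "rdescent k x" using rdescent_exists[OF xp False] .
      define y where "y = x \<circ> sref k"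
      have y: "y \<in> Sn n" unfolding y_def using comp_in_Sn[OF less.prems sref_in_Sn[OF k(1,2)]] .
      have x: "hT x = Rgen t k (hT y)"
        using Rgen_hT[OF y k(1,2), of t] rdescent_comp_sref[OF xp] k(3)
        unfolding y_def by (simp add: comp_assoc)
      have "A (hT y) = B (hT y)"
        using less(1)[OF _ y] plen_comp_sref[OF xp k(1,2)] plen_pos_if_rdescent[OF xp k] k(3)
        unfolding y_def by simp
      then show ?thesis unfolding x
        using Rgen_equivariantD[OF A(2) k(1,2) hT_in_Hn[OF y]]
          Rgen_equivariantD[OF B(2) k(1,2) hT_in_Hn[OF y]] by simp
    qed (use base in simp)
  qed
  show ?thesis
    by (rule ext) (simp add: hlinearD(1)[OF A(1) v] hlinearD(1)[OF B(1) v] basis)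
qed

section \<open>The product of \<open>H\<^sub>n\<close>\<close>

lemma hlinear_foldr_Lgen:
  assumes "set ws \<subseteq> {1..<n}"
  shows "hlinear n (foldr (Lgen t) ws) \<and> Rgen_equivariant n t (foldr (Lgen t) ws)"
  using assms
proof (induction ws)
  case Nil
  then show ?case by (simp add: hlinear_id Rgen_equivariant_id)
next
  case (Cons i ws)
  have i: "1 \<le> i" "i < n" using Cons.prems by auto
  have "foldr (Lgen t) (i # ws) = (\<lambda>v. Lgen t i (foldr (Lgen t) ws v))" by auto
  then show ?case
    using hlinear_comp[OF hlinear_Lgen[OF i]] Rgen_equivariant_comp[OF Rgen_equivariant_Lgen[OF i]]
      Cons by auto
qed

lemma foldr_Lgen_hT_id:
  "reduced_word n ws w \<Longrightarrow> foldr (Lgen t) ws (hT id) = hT w"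
proof (induction ws arbitrary: w)
  case Nil
  then show ?case by (simp add: reduced_word_def)
next
  case (Cons i ws)
  have i: "1 \<le> i" "i < n" and ws: "set ws \<subseteq> {1..<n}" using Cons.prems by (auto simp: reduced_word_def)
  define p where "p = wprod ws"
  have pp: "p permutes {1..n}" unfolding p_def using wprod_permutes[OF ws] .
  have w: "w = sref i \<circ> p" and len: "plen n w = Suc (length ws)"
    using Cons.prems unfolding reduced_word_def p_def by auto
  \<comment> \<open>A word of length \<open>\<ell>(w)\<close> is reduced, so each letter raises the length.\<close>
  have "plen n p \<le> length ws" unfolding p_def using plen_wprod_le[OF ws] .
  then have nd: "\<not> ldescent i p" and lp: "plen n p = length ws"
    using plen_sref_comp[OF pp i] w len by (auto split: if_splits)
  have "reduced_word n ws p" using ws lp unfolding reduced_word_def p_def by simp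
  then have "foldr (Lgen t) (i # ws) (hT id) = Lgen t i (hT p)" using Cons.IH by (simp add: id_def)
  also have "\<dots> = hT w" unfolding w by (rule Lgen_hT[OF _ i nd]) (use pp in \<open>simp add: mem_Sn_iff\<close>)
  finally show ?case .
qed

lemma foldr_hgen_eq_foldr_Lgen:
  assumes "set ws \<subseteq> {1..<n}" and v: "v \<in> Hn n"
  shows "foldr (hgen n t) ws v = foldr (Lgen t) ws v"
  using assms(1)
proof (induction ws)
  case (Cons i ws)
  then have i: "1 \<le> i" "i < n" and ws: "set ws \<subseteq> {1..<n}" by auto
  have "foldr (Lgen t) ws v \<in> Hn n"
    using hlinearD(2) conjunct1[OF hlinear_foldr_Lgen[OF ws]] v by blast
  then show ?case using Cons.IH[OF ws] hgen_eq_Lgen[OF _ i] by simp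
qed simp

lemma hop_eq_foldr_Lgen:
  "w \<in> Sn n \<Longrightarrow> v \<in> Hn n \<Longrightarrow> hop n t w v = foldr (Lgen t) (redword n w) v"
  unfolding hop_def using reduced_word_redword
  by (simp add: foldr_hgen_eq_foldr_Lgen mem_Sn_iff reduced_word_def)

lemma
  assumes w: "w \<in> Sn n"
  shows hlinear_hop: "hlinear n (hop n t w)"
    and Rgen_equivariant_hop: "Rgen_equivariant n t (hop n t w)"
    and hop_hT_id: "hop n t w (hT id) = hT w"
proof -
  have r: "reduced_word n (redword n w) w" using reduced_word_redword w by (simp add: mem_Sn_iff)
  then have L: "hlinear n (foldr (Lgen t) (redword n w))"
    and R: "Rgen_equivariant n t (foldr (Lgen t) (redword n w))"
    using hlinear_foldr_Lgen by (auto simp: reduced_word_def)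
  note hop = hop_eq_foldr_Lgen[OF w, where t=t]
  show "hlinear n (hop n t w)"
    unfolding hlinear_def
  proof (intro ballI conjI)
    fix v :: "'a hecke" assume v: "v \<in> Hn n"
    show "hop n t w v \<in> Hn n" using hop[OF v] hlinearD(2)[OF L v] by simp
    show "hop n t w v = (\<lambda>x. \<Sum>y\<in>Sn n. v y * hop n t w (hT y) x)"
    proof
      fix x
      have "hop n t w v x = (\<Sum>y\<in>Sn n. v y * foldr (Lgen t) (redword n w) (hT y) x)"
        using hop[OF v] hlinearD(1)[OF L v] by simp
      also have "\<dots> = (\<Sum>y\<in>Sn n. v y * hop n t w (hT y) x)"
        by (intro sum.cong refl) (simp add: hop hT_in_Hn)
      finally show "hop n t w v x = (\<Sum>y\<in>Sn n. v y * hop n t w (hT y) x)" .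
    qed
  qed
  show "Rgen_equivariant n t (hop n t w)"
    unfolding Rgen_equivariant_def
    using hop Rgen_in_Hn[where t=t] Rgen_equivariantD[OF R] by simp
  show "hop n t w (hT id) = hT w"
    using hop[OF hT_in_Hn[OF id_in_Sn]] foldr_Lgen_hT_id[OF r] by simp
qed

lemma hop_sref:
  assumes i: "1 \<le> i" "i < n" and v: "v \<in> Hn n"
  shows "hop n t (sref i) v = Lgen t i v"
proof (rule hlinear_Rgen_equivariant_eqI[OF hlinear_hop Rgen_equivariant_hop
      hlinear_Lgen[OF i] Rgen_equivariant_Lgen[OF i] _ v])
  show "hop n t (sref i) (hT id) = Lgen t i (hT id)"
    using hop_hT_id[OF sref_in_Sn[OF i]] Lgen_hT[OF id_in_Sn i not_ldescent_id, of t] by simp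
qed (rule sref_in_Sn[OF i])+

lemma hop_id: "v \<in> Hn n \<Longrightarrow> hop n t id v = v"
  by (rule hlinear_Rgen_equivariant_eqI[OF hlinear_hop Rgen_equivariant_hop hlinear_id
      Rgen_equivariant_id]) (simp_all add: hop_hT_id)

lemma hmul_in_Hn: "v \<in> Hn n \<Longrightarrow> hmul n t h v \<in> Hn n"
proof (rule HnI)
  fix x assume v: "v \<in> Hn n" and x: "x \<notin> Sn n"
  have "hop n t w v x = 0" if "w \<in> Sn n" for w
    using hlinearD(2)[OF hlinear_hop[OF that] v] HnD x by blast
  then show "hmul n t h v x = 0" unfolding hmul_def by simp
qed

lemma hlinear_hmul: "hlinear n (hmul n t h)"
  unfolding hlinear_def
proof (intro ballI conjI ext)
  fix v :: "'a hecke" and x assume v: "v \<in> Hn n"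
  show "hmul n t h v \<in> Hn n" using hmul_in_Hn[OF v] .
  have "hmul n t h v x = (\<Sum>w\<in>Sn n. \<Sum>y\<in>Sn n. v y * (h w * hop n t w (hT y) x))"
    unfolding hmul_def
    by (intro sum.cong refl) (simp add: hlinearD(1)[OF hlinear_hop v] sum_distrib_left mult.left_commute)
  also have "\<dots> = (\<Sum>y\<in>Sn n. \<Sum>w\<in>Sn n. v y * (h w * hop n t w (hT y) x))"
    by (rule sum.swap)
  finally show "hmul n t h v x = (\<Sum>y\<in>Sn n. v y * hmul n t h (hT y) x)"
    unfolding hmul_def by (simp add: sum_distrib_left)
qed

lemma Rgen_equivariant_hmul: "Rgen_equivariant n t (hmul n t h)"
  unfolding Rgen_equivariant_def
proof (intro allI impI ext)
  fix k x and v :: "'a hecke" assume k: "1 \<le> k" "k < n" and v: "v \<in> Hn n"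
  have "hmul n t h (Rgen t k v) x = (\<Sum>w\<in>Sn n. h w * Rgen t k (hop n t w v) x)"
    unfolding hmul_def by (intro sum.cong refl) (simp add: Rgen_equivariantD[OF Rgen_equivariant_hop k v])
  also have "\<dots> = Rgen t k (hmul n t h v) x"
    unfolding hmul_def Rgen_def
    by (simp add: sum.distrib sum_distrib_left distrib_left mult.left_commute)
  finally show "hmul n t h (Rgen t k v) x = Rgen t k (hmul n t h v) x" .
qed

lemma hmul_hT_left:
  assumes "w \<in> Sn n"
  shows "hmul n t (hT w) v = hop n t w v"
proof
  fix x
  have "hmul n t (hT w) v x = (\<Sum>u\<in>Sn n. if u = w then hop n t u v x else 0)"
    unfolding hmul_def hT_def by (intro sum.cong) simp_all
  then show "hmul n t (hT w) v x = hop n t w v x" using assms by (simp add: sum.delta)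
qed

lemma hmul_hT_id_right: "h \<in> Hn n \<Longrightarrow> hmul n t h (hT id) = h"
  unfolding hmul_def by (simp add: hop_hT_id Hn_expansion[symmetric])

lemma hone_in_Hn [simp]: "hone \<in> Hn n"
  unfolding hone_def by (rule hT_in_Hn[OF id_in_Sn])

lemma hmul_hone_left: "v \<in> Hn n \<Longrightarrow> hmul n t hone v = v"
  unfolding hone_def by (simp add: hmul_hT_left hop_id)

lemma hmul_hone_right: "h \<in> Hn n \<Longrightarrow> hmul n t h hone = h"
  unfolding hone_def by (rule hmul_hT_id_right)

lemma hmul_assoc:
  assumes h: "h \<in> Hn n" and g: "g \<in> Hn n" and v: "v \<in> Hn n"
  shows "hmul n t h (hmul n t g v) = hmul n t (hmul n t h g) v"
  by (rule hlinear_Rgen_equivariant_eqI[OF hlinear_comp[OF hlinear_hmul hlinear_hmul]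
      Rgen_equivariant_comp[OF Rgen_equivariant_hmul Rgen_equivariant_hmul hlinear_hmul]
      hlinear_hmul Rgen_equivariant_hmul _ v])
    (simp add: hmul_hT_id_right g hmul_in_Hn)

lemma hmul_lincomb_left:
  "hmul n t (\<lambda>x. a * h x + b * g x) v = (\<lambda>x. a * hmul n t h v x + b * hmul n t g v x)"
  unfolding hmul_def by (simp add: sum.distrib sum_distrib_left distrib_right mult.assoc)

lemma hmul_smult_left: "hmul n t (\<lambda>x. a * h x) v = (\<lambda>x. a * hmul n t h v x)"
  unfolding hmul_def by (simp add: sum_distrib_left mult.assoc)

lemma hmul_hT_sref_left:
  "1 \<le> i \<Longrightarrow> i < n \<Longrightarrow> v \<in> Hn n \<Longrightarrow> hmul n t (hT (sref i)) v = Lgen t i v"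
  by (simp add: hmul_hT_left sref_in_Sn hop_sref)

section \<open>Inverses\<close>

definition invertible :: "nat \<Rightarrow> 'a::comm_ring_1 \<Rightarrow> 'a hecke \<Rightarrow> bool" where
  "invertible n t h \<longleftrightarrow> (\<exists>g\<in>Hn n. hmul n t h g = hone \<and> hmul n t g h = hone)"

lemma hinv_eqI:
  assumes h: "h \<in> Hn n" and g: "g \<in> Hn n" and hg: "hmul n t h g = hone" and gh: "hmul n t g h = hone"
  shows "hinv n t h = g"
  unfolding hinv_def
proof (rule the_equality)
  show "g \<in> Hn n \<and> hmul n t h g = hone \<and> hmul n t g h = hone" using g hg gh by simp
  fix g' assume g': "g' \<in> Hn n \<and> hmul n t h g' = hone \<and> hmul n t g' h = hone"
  have "g' = hmul n t g' (hmul n t h g)" using hmul_hone_right[of g' n t] g' unfolding hg by simp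
  also have "\<dots> = hmul n t (hmul n t g' h) g" using hmul_assoc[OF _ h g] g' by blast
  also have "\<dots> = g" using g' hmul_hone_left[OF g] by simp
  finally show "g' = g" .
qed

lemma invertibleD:
  assumes h: "h \<in> Hn n" and "invertible n t h"
  shows "hinv n t h \<in> Hn n" "hmul n t h (hinv n t h) = hone" "hmul n t (hinv n t h) h = hone"
proof -
  obtain g where g: "g \<in> Hn n" "hmul n t h g = hone" "hmul n t g h = hone"
    using assms(2) unfolding invertible_def by blast
  then show "hinv n t h \<in> Hn n" "hmul n t h (hinv n t h) = hone" "hmul n t (hinv n t h) h = hone"
    using hinv_eqI[OF h g] by simp_all
qed

lemma invertible_hmul:
  assumes A: "A \<in> Hn n" "invertible n t A" and B: "B \<in> Hn n" "invertible n t B"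
  shows "invertible n t (hmul n t A B)"
    and "hinv n t (hmul n t A B) = hmul n t (hinv n t B) (hinv n t A)"
proof -
  note a = invertibleD[OF A] and b = invertibleD[OF B]
  have AB: "hmul n t A B \<in> Hn n" and BA: "hmul n t (hinv n t B) (hinv n t A) \<in> Hn n"
    using hmul_in_Hn[OF B(1)] hmul_in_Hn[OF a(1)] .
  have "hmul n t (hmul n t A B) (hmul n t (hinv n t B) (hinv n t A))
      = hmul n t A (hmul n t (hmul n t B (hinv n t B)) (hinv n t A))"
    by (simp only: hmul_assoc[OF A(1) B(1) BA, symmetric] hmul_assoc[OF B(1) b(1) a(1)])
  also have "\<dots> = hone" by (simp only: b(2) hmul_hone_left[OF a(1)] a(2))
  finally have 1: "hmul n t (hmul n t A B) (hmul n t (hinv n t B) (hinv n t A)) = hone" .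
  have "hmul n t (hmul n t (hinv n t B) (hinv n t A)) (hmul n t A B)
      = hmul n t (hinv n t B) (hmul n t (hmul n t (hinv n t A) A) B)"
    by (simp only: hmul_assoc[OF b(1) a(1) AB, symmetric] hmul_assoc[OF a(1) A(1) B(1)])
  also have "\<dots> = hone" by (simp only: a(3) hmul_hone_left[OF B(1)] b(3))
  finally have 2: "hmul n t (hmul n t (hinv n t B) (hinv n t A)) (hmul n t A B) = hone" .
  show "invertible n t (hmul n t A B)" unfolding invertible_def using BA 1 2 by blast
  show "hinv n t (hmul n t A B) = hmul n t (hinv n t B) (hinv n t A)"
    by (rule hinv_eqI[OF AB BA 1 2])
qed

text \<open>\<open>Tplus t i = T\<^sub>i + (1 - t) = t T\<^sub>i\<^sup>-\<^sup>1\<close>, by the quadratic relation.\<close>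

definition Tplus :: "'a::comm_ring_1 \<Rightarrow> nat \<Rightarrow> 'a hecke" where
  "Tplus t i = (\<lambda>x. 1 * hT (sref i) x + (1 - t) * hone x)"

lemma Tplus_in_Hn: "1 \<le> i \<Longrightarrow> i < n \<Longrightarrow> Tplus t i \<in> Hn n"
  unfolding Tplus_def by (intro lincomb_in_Hn hT_in_Hn sref_in_Sn hone_in_Hn)

lemma hmul_Tplus_left:
  assumes i: "1 \<le> i" "i < n" and Z: "Z \<in> Hn n"
  shows "hmul n t (Tplus t i) Z = (\<lambda>x. Lgen t i Z x + (1 - t) * Z x)"
  unfolding Tplus_def hmul_lincomb_left by (simp add: hmul_hT_sref_left[OF i Z] hmul_hone_left[OF Z])

lemma Lgen_hone: "1 \<le> i \<Longrightarrow> i < n \<Longrightarrow> Lgen t i hone = hT (sref i)"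
  unfolding hone_def using Lgen_hT[OF id_in_Sn _ _ not_ldescent_id] by simp

lemma Lgen_hT_sref:
  "1 \<le> i \<Longrightarrow> i < n \<Longrightarrow> Lgen t i (hT (sref i)) = (\<lambda>x. (t - 1) * hT (sref i) x + t * hone x)"
  using Lgen_Lgen[OF hone_in_Hn, of i n t] by (simp add: Lgen_hone)

lemma hmul_hT_sref_Tplus:
  assumes i: "1 \<le> i" "i < n"
  shows "hmul n t (hT (sref i)) (Tplus t i) = (\<lambda>x. t * hone x)"
proof -
  have "hmul n t (hT (sref i)) (Tplus t i) = Lgen t i (Tplus t i)"
    by (rule hmul_hT_sref_left[OF i Tplus_in_Hn[OF i]])
  also have "\<dots> = (\<lambda>x. 1 * Lgen t i (hT (sref i)) x + (1 - t) * Lgen t i hone x)"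
    unfolding Tplus_def
    by (rule hlinear_lincomb[OF hlinear_Lgen[OF i] hT_in_Hn[OF sref_in_Sn[OF i]] hone_in_Hn])
  also have "\<dots> = (\<lambda>x. t * hone x)"
    unfolding Lgen_hT_sref[OF i] Lgen_hone[OF i] by (simp add: algebra_simps)
  finally show ?thesis .
qed

lemma hmul_Tplus_hT_sref:
  assumes i: "1 \<le> i" "i < n"
  shows "hmul n t (Tplus t i) (hT (sref i)) = (\<lambda>x. t * hone x)"
  unfolding hmul_Tplus_left[OF i hT_in_Hn[OF sref_in_Sn[OF i]]] Lgen_hT_sref[OF i]
  by (simp add: algebra_simps)

lemma
  assumes i: "1 \<le> i" "i < n" and ti: "t * ti = 1"
  shows hinv_hT_sref: "hinv n t (hT (sref i)) = (\<lambda>x. ti * Tplus t i x)"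
    and invertible_hT_sref: "invertible n t (hT (sref i))"
proof -
  have T: "(\<lambda>x. ti * Tplus t i x) \<in> Hn n" using smult_in_Hn[OF Tplus_in_Hn[OF i]] .
  have r: "hmul n t (hT (sref i)) (\<lambda>x. ti * Tplus t i x) = hone"
    unfolding hlinear_smult[OF hlinear_hmul Tplus_in_Hn[OF i]] hmul_hT_sref_Tplus[OF i]
    using ti by (simp add: mult.assoc[symmetric] mult.commute[of ti])
  have l: "hmul n t (\<lambda>x. ti * Tplus t i x) (hT (sref i)) = hone"
    unfolding hmul_smult_left hmul_Tplus_hT_sref[OF i]
    using ti by (simp add: mult.assoc[symmetric] mult.commute[of ti])
  show "hinv n t (hT (sref i)) = (\<lambda>x. ti * Tplus t i x)"
    by (rule hinv_eqI[OF hT_in_Hn[OF sref_in_Sn[OF i]] T r l])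
  show "invertible n t (hT (sref i))" unfolding invertible_def using T r l by blast
qed

lemma hmul_hT_sref_hT:
  "a \<in> Sn n \<Longrightarrow> 1 \<le> i \<Longrightarrow> i < n \<Longrightarrow> \<not> ldescent i a \<Longrightarrow>
    hmul n t (hT (sref i)) (hT a) = hT (sref i \<circ> a)"
  by (simp add: hmul_hT_sref_left hT_in_Hn Lgen_hT)

lemma hmul_hT_hT_sref:
  assumes a: "a \<in> Sn n" and k: "1 \<le> k" "k < n" and nd: "\<not> rdescent k a"
  shows "hmul n t (hT a) (hT (sref k)) = hT (a \<circ> sref k)"
proof -
  have "hT (sref k) = Rgen t k (hT id)" using Rgen_hT[OF id_in_Sn k not_rdescent_id, of t] by simp
  then have "hmul n t (hT a) (hT (sref k)) = Rgen t k (hop n t a (hT id))"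
    using hmul_hT_left[OF a, where t=t]
      Rgen_equivariantD[OF Rgen_equivariant_hop[OF a, where t=t] k hT_in_Hn[OF id_in_Sn]]
    by simp
  then show ?thesis using hop_hT_id[OF a, where t=t] Rgen_hT[OF a k nd, where t=t] by simp
qed

lemma invertible_hT:
  assumes w: "w \<in> Sn n" and ti: "t * ti = 1"
  shows "invertible n t (hT w)"
  using w
proof (induction "plen n w" arbitrary: w rule: less_induct)
  case less
  have wp: "w permutes {1..n}" using less.prems by (simp add: mem_Sn_iff)
  show ?case
  proof (cases "w = id")
    case True
    have "hmul n t hone hone = hone" by (rule hmul_hone_left[OF hone_in_Hn])
    then show ?thesis unfolding invertible_def True hone_def[symmetric] using hone_in_Hn by blast
  next
    case False
    obtain i where i: "1 \<le> i" "i < n" "ldescent i w" using ldescent_exists[OF wp False] .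
    define w' where "w' = sref i \<circ> w"
    have w': "w' \<in> Sn n" unfolding w'_def using comp_in_Sn[OF sref_in_Sn[OF i(1,2)] less.prems] .
    have "\<not> ldescent i w'" unfolding w'_def using ldescent_sref_comp[OF wp] i(3) by simp
    then have "hT w = hmul n t (hT (sref i)) (hT w')"
      using hmul_hT_sref_hT[OF w' i(1,2), where t=t] unfolding w'_def by (simp add: comp_assoc[symmetric])
    moreover have "plen n w' < plen n w"
      unfolding w'_def using plen_sref_comp_less_iff[OF wp i(1,2)] i(3) by simp
    ultimately show ?thesis
      using invertible_hmul(1)[OF hT_in_Hn[OF sref_in_Sn[OF i(1,2)]] invertible_hT_sref[OF i(1,2) ti]
          hT_in_Hn[OF w']] less.hyps w' by simp
  qed
qed

definition theta :: "nat \<Rightarrow> 'a::comm_ring_1 \<Rightarrow> perm \<Rightarrow> 'a hecke" where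
  "theta n t u = (\<lambda>x. t ^ plen n u * hinv n t (hT (inv u)) x)"

lemma theta_in_Hn: "u \<in> Sn n \<Longrightarrow> t * ti = 1 \<Longrightarrow> theta n t u \<in> Hn n"
  unfolding theta_def
  by (intro smult_in_Hn invertibleD(1) hT_in_Hn invertible_hT inv_in_Sn)

lemma t_hinv_hT_sref:
  "1 \<le> i \<Longrightarrow> i < n \<Longrightarrow> t * ti = 1 \<Longrightarrow> (\<lambda>x. t * hinv n t (hT (sref i)) x) = Tplus t i"
  by (simp add: hinv_hT_sref mult.assoc[symmetric])

lemma theta_sref_comp:
  assumes u: "u \<in> Sn n" and j: "1 \<le> j" "j < n" and nd: "\<not> ldescent j u" and ti: "t * ti = 1"
  shows "theta n t (sref j \<circ> u) = hmul n t (Tplus t j) (theta n t u)"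
proof -
  have up: "u permutes {1..n}" using u by (simp add: mem_Sn_iff)
  have iu: "inv u \<in> Sn n" using inv_in_Sn[OF u] .
  have "\<not> rdescent j (inv u)" using ldescent_inv[OF permutes_inv[OF up], of j] nd
    by (simp add: permutes_inv_inv[OF up])
  then have "hT (inv (sref j \<circ> u)) = hmul n t (hT (inv u)) (hT (sref j))"
    unfolding inv_sref_comp[OF up] by (rule hmul_hT_hT_sref[OF iu j, symmetric])
  then have H: "hinv n t (hT (inv (sref j \<circ> u))) = hmul n t (hinv n t (hT (sref j))) (hinv n t (hT (inv u)))"
    using invertible_hmul(2)[OF hT_in_Hn[OF iu] invertible_hT[OF iu ti] hT_in_Hn[OF sref_in_Sn[OF j]]
      invertible_hT_sref[OF j ti]] by simp
  have pl: "plen n (sref j \<circ> u) = Suc (plen n u)" using plen_sref_comp[OF up j] nd by simp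
  have hi: "hinv n t (hT (inv u)) \<in> Hn n" using invertibleD(1)[OF hT_in_Hn[OF iu] invertible_hT[OF iu ti]] .
  show ?thesis
    unfolding theta_def H pl hlinear_smult[OF hlinear_hmul hi] t_hinv_hT_sref[OF j ti, symmetric]
      hmul_smult_left by (simp add: algebra_simps)
qed

lemma theta_comp_sref:
  assumes u: "u \<in> Sn n" and k: "1 \<le> k" "k < n" and nd: "\<not> rdescent k u" and ti: "t * ti = 1"
  shows "theta n t (u \<circ> sref k) = hmul n t (theta n t u) (Tplus t k)"
proof -
  have up: "u permutes {1..n}" using u by (simp add: mem_Sn_iff)
  have iu: "inv u \<in> Sn n" using inv_in_Sn[OF u] .
  have "\<not> ldescent k (inv u)" using ldescent_inv[OF up, of k] nd by simp
  then have "hT (inv (u \<circ> sref k)) = hmul n t (hT (sref k)) (hT (inv u))"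
    unfolding inv_comp_sref[OF up] by (rule hmul_hT_sref_hT[OF iu k, symmetric])
  then have H: "hinv n t (hT (inv (u \<circ> sref k))) = hmul n t (hinv n t (hT (inv u))) (hinv n t (hT (sref k)))"
    using invertible_hmul(2)[OF hT_in_Hn[OF sref_in_Sn[OF k]] invertible_hT_sref[OF k ti]
      hT_in_Hn[OF iu] invertible_hT[OF iu ti]] by simp
  have pl: "plen n (u \<circ> sref k) = Suc (plen n u)" using plen_comp_sref[OF up k] nd by simp
  have hk: "hinv n t (hT (sref k)) \<in> Hn n"
    using invertibleD(1)[OF hT_in_Hn[OF sref_in_Sn[OF k]] invertible_hT_sref[OF k ti]] .
  show ?thesis
    unfolding theta_def H pl hmul_smult_left t_hinv_hT_sref[OF k ti, symmetric]
      hlinear_smult[OF hlinear_hmul hk] by (simp add: algebra_simps)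
qed

lemma hmul_hT_sref_theta:
  assumes u: "u \<in> Sn n" and j: "1 \<le> j" "j < n" and k: "1 \<le> k" "k < n"
    and sc: "sref j \<circ> u = u \<circ> sref k" and ndl: "\<not> ldescent j u" and ndr: "\<not> rdescent k u"
    and ti: "t * ti = 1"
  shows "hmul n t (hT (sref j)) (theta n t u) = hmul n t (theta n t u) (hT (sref k))"
proof -
  have th: "theta n t u \<in> Hn n" using theta_in_Hn[OF u ti] .
  have "hmul n t (Tplus t j) (theta n t u) = hmul n t (theta n t u) (Tplus t k)"
    using theta_sref_comp[OF u j ndl ti] theta_comp_sref[OF u k ndr ti] sc by simp
  moreover have "hmul n t (Tplus t j) (theta n t u) =
      (\<lambda>x. 1 * hmul n t (hT (sref j)) (theta n t u) x + (1 - t) * theta n t u x)"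
    unfolding Tplus_def hmul_lincomb_left hmul_hone_left[OF th] ..
  moreover have "hmul n t (theta n t u) (Tplus t k) =
      (\<lambda>x. 1 * hmul n t (theta n t u) (hT (sref k)) x + (1 - t) * theta n t u x)"
    unfolding Tplus_def hlinear_lincomb[OF hlinear_hmul hT_in_Hn[OF sref_in_Sn[OF k]] hone_in_Hn]
      hmul_hone_right[OF th] ..
  ultimately show ?thesis by (simp add: fun_eq_iff)
qed

section \<open>Columns and minimal coset representatives\<close>

lemma sorted_wrt_sorted_list_of_set: "finite A \<Longrightarrow> sorted_wrt (<) (sorted_list_of_set A)"
  by (simp add: strict_sorted_iff)

lemma sorted_list_of_set_set_strict: "sorted_wrt (<) G \<Longrightarrow> sorted_list_of_set (set G) = G"
  using strict_sorted_equal[of G "sorted_list_of_set (set G)"] sorted_wrt_sorted_list_of_set[of "set G"]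
  by simp

lemma colsD:
  assumes "G \<in> cols n l"
  shows "sorted_wrt (<) G" "distinct G" "length G = l" "set G \<subseteq> {1..n}" "l \<le> n" "card (set G) = l"
proof -
  show sG: "sorted_wrt (<) G" "length G = l" "set G \<subseteq> {1..n}" using assms unfolding cols_def by auto
  then show dG: "distinct G" by (simp add: strict_sorted_iff)
  show "card (set G) = l" using dG sG by (simp add: distinct_card)
  then show "l \<le> n" using card_mono[OF _ sG(3)] by simp
qed

lemma cols_length: "G \<in> cols n l \<Longrightarrow> G \<in> cols n (length G)"
  using colsD(3) by blast

lemma finite_cols: "finite (cols n l)"
  by (rule finite_subset[of _ "{xs. set xs \<subseteq> {1..n} \<and> length xs = l}"])
    (auto simp: cols_def intro: finite_lists_length_eq)

definition cocol :: "nat \<Rightarrow> nat list \<Rightarrow> nat list" where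
  "cocol n G = sorted_list_of_set ({1..n} - set G)"

lemma cocolD:
  assumes "G \<in> cols n l"
  shows "sorted_wrt (<) (cocol n G)" "set (cocol n G) = {1..n} - set G" "length (cocol n G) = n - l"
  using colsD[OF assms]
  by (simp_all add: cocol_def sorted_wrt_sorted_list_of_set card_Diff_subset)

lemma
  assumes G: "G \<in> cols n l"
  shows ucol_lower: "1 \<le> k \<Longrightarrow> k \<le> l \<Longrightarrow> ucol n G k = G ! (k - 1)"
    and ucol_upper: "l < k \<Longrightarrow> k \<le> n \<Longrightarrow> ucol n G k = cocol n G ! (k - l - 1)"
    and ucol_outside: "k \<notin> {1..n} \<Longrightarrow> ucol n G k = k"
  unfolding ucol_def cocol_def using colsD(3,5)[OF G] by auto

lemma map_ucol_lower: "G \<in> cols n l \<Longrightarrow> map (ucol n G) [1..<Suc l] = G"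
  by (rule nth_equalityI) (auto simp del: upt_Suc simp: colsD(3) ucol_lower nth_upt)

lemma map_ucol_upper: "G \<in> cols n l \<Longrightarrow> map (ucol n G) [Suc l..<Suc n] = cocol n G"
  by (rule nth_equalityI) (auto simp del: upt_Suc simp: colsD(5) cocolD(3) ucol_upper nth_upt)

lemma ucol_image_lower:
  assumes G: "G \<in> cols n l"
  shows "ucol n G ` {1..l} = set G"
proof -
  have "ucol n G ` {1..<Suc l} = set G"
    using arg_cong[OF map_ucol_lower[OF G], of set] by (simp only: set_map set_upt)
  then show ?thesis by (simp only: atLeastLessThanSuc_atLeastAtMost)
qed

lemma ucol_image_upper:
  assumes G: "G \<in> cols n l"
  shows "ucol n G ` {Suc l..n} = {1..n} - set G"
proof -
  have "ucol n G ` {Suc l..<Suc n} = set (cocol n G)"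
    using arg_cong[OF map_ucol_upper[OF G], of set] by (simp only: set_map set_upt)
  then show ?thesis by (simp only: atLeastLessThanSuc_atLeastAtMost cocolD(2)[OF G])
qed

lemma ucol_permutes:
  assumes G: "G \<in> cols n l"
  shows "ucol n G permutes {1..n}"
proof (rule inj_imp_permutes)
  have "[1..<Suc n] = [1..<Suc l] @ [Suc l..<Suc n]"
    using upt_add_eq_append[of 1 "Suc l" "n - l"] colsD(5)[OF G] by simp
  then have "map (ucol n G) [1..<Suc n] = G @ cocol n G"
    using map_ucol_lower[OF G] map_ucol_upper[OF G] by simp
  moreover have "distinct (G @ cocol n G)"
    using colsD(2)[OF G] cocolD[OF G] by (auto simp: strict_sorted_iff)
  ultimately show "inj_on (ucol n G) {1..n}"
    by (metis distinct_map atLeastLessThanSuc_atLeastAtMost set_upt)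
  show "ucol n G x \<in> {1..n}" if "x \<in> {1..n}" for x
    using that ucol_image_lower[OF G] ucol_image_upper[OF G] colsD(4)[OF G]
    by (cases "x \<le> l") fastforce+
qed (simp_all add: ucol_outside[OF G])

lemma ucol_in_Sn: "G \<in> cols n l \<Longrightarrow> ucol n G \<in> Sn n"
  using ucol_permutes by (simp add: mem_Sn_iff)

lemma ucol_apply_in_iff:
  assumes G: "G \<in> cols n l" and x: "x \<in> {1..n}"
  shows "ucol n G x \<in> set G \<longleftrightarrow> x \<le> l"
  using ucol_image_lower[OF G] ucol_image_upper[OF G] x by (cases "x \<le> l") auto

lemma inv_ucolD:
  assumes G: "G \<in> cols n l" and y: "y \<in> {1..n}"
  shows "inv (ucol n G) y \<in> {1..n}" "ucol n G (inv (ucol n G) y) = y"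
    "inv (ucol n G) y \<le> l \<longleftrightarrow> y \<in> set G"
proof -
  have p: "ucol n G permutes {1..n}" using ucol_permutes[OF G] .
  show a: "inv (ucol n G) y \<in> {1..n}" using permutes_in_image[OF permutes_inv[OF p]] y by simp
  show b: "ucol n G (inv (ucol n G) y) = y" using permutes_inverses(1)[OF p] by simp
  show "inv (ucol n G) y \<le> l \<longleftrightarrow> y \<in> set G" using ucol_apply_in_iff[OF G a] b by simp
qed

text \<open>\<open>u\<^sub>G\<close> is the unique permutation mapping \<open>{1..l}\<close> onto \<open>G\<close> that increases on \<open>{1..l}\<close>
  and on \<open>{l+1..n}\<close>, i.e.\ the minimal representative of its coset modulo \<open>Stab n l\<close>.\<close>

definition increasing_on_blocks :: "nat \<Rightarrow> nat \<Rightarrow> perm \<Rightarrow> bool" where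
  "increasing_on_blocks n l w \<longleftrightarrow>
     (\<forall>a b. 1 \<le> a \<longrightarrow> a < b \<longrightarrow> b \<le> n \<longrightarrow> (a \<le> l \<longleftrightarrow> b \<le> l) \<longrightarrow> w a < w b)"

lemma increasing_on_blocks_ucol:
  assumes G: "G \<in> cols n l"
  shows "increasing_on_blocks n l (ucol n G)"
  unfolding increasing_on_blocks_def
proof (intro allI impI)
  fix a b assume ab: "1 \<le> a" "a < b" "b \<le> n" "(a \<le> l) = (b \<le> l)"
  show "ucol n G a < ucol n G b"
  proof (cases "b \<le> l")
    case True
    then show ?thesis
      using ab ucol_lower[OF G] sorted_wrt_nth_less[OF colsD(1)[OF G], of "a - 1" "b - 1"] colsD(3)[OF G]
      by auto
  next
    case False
    then show ?thesis
      using ab ucol_upper[OF G] sorted_wrt_nth_less[OF cocolD(1)[OF G], of "a - l - 1" "b - l - 1"]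
        cocolD(3)[OF G] by auto
  qed
qed

lemma map_upt_eq_sorted_list:
  fixes L :: "nat list" and w :: perm
  assumes "sorted_wrt (<) L" "set L = w ` {a..b}" "\<And>x y. a \<le> x \<Longrightarrow> x < y \<Longrightarrow> y \<le> b \<Longrightarrow> w x < w y"
  shows "map w [a..<Suc b] = L"
proof (rule strict_sorted_equal)
  show "sorted_wrt (<) (map w [a..<Suc b])"
    unfolding sorted_wrt_map by (rule sorted_wrt_mono_rel[of _ "(<)"]) (auto simp: assms(3) simp del: upt_Suc)
qed (use assms in \<open>auto simp: atLeastLessThanSuc_atLeastAtMost\<close>)

lemma ucol_unique:
  assumes G: "G \<in> cols n l" and w: "w permutes {1..n}" and img: "w ` {1..l} = set G"
    and inc: "increasing_on_blocks n l w"
  shows "w = ucol n G"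
proof
  fix k
  have lo: "map w [1..<Suc l] = G"
    by (rule map_upt_eq_sorted_list[OF colsD(1)[OF G] img[symmetric]])
      (use inc colsD(5)[OF G] in \<open>auto simp: increasing_on_blocks_def\<close>)
  have "{1..n} = {1..l} \<union> {Suc l..n}" using colsD(5)[OF G] by auto
  then have "w ` {1..l} \<union> w ` {Suc l..n} = {1..n}"
    using permutes_image[OF w] by (metis image_Un)
  moreover have "w ` {1..l} \<inter> w ` {Suc l..n} = {}"
    using permutes_inj[OF w] by (auto simp: inj_eq)
  ultimately have "w ` {Suc l..n} = {1..n} - set G" using img by blast
  then have hi: "map w [Suc l..<Suc n] = cocol n G"
    by (intro map_upt_eq_sorted_list[OF cocolD(1)[OF G]])
      (use inc cocolD(2)[OF G] in \<open>auto simp: increasing_on_blocks_def\<close>)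
  show "w k = ucol n G k"
  proof (cases "k \<in> {1..n}")
    case True
    show ?thesis
    proof (cases "k \<le> l")
      case True
      then have "k - 1 < Suc l - 1" "1 + (k - 1) = k" using \<open>k \<in> {1..n}\<close> by auto
      then have "w k = G ! (k - 1)" using lo nth_map_upt[of "k - 1" "Suc l" 1 w] by (simp del: upt_Suc)
      then show ?thesis using ucol_lower[OF G] True \<open>k \<in> {1..n}\<close> by simp
    next
      case False
      then have "k - l - 1 < Suc n - Suc l" "Suc l + (k - l - 1) = k" using \<open>k \<in> {1..n}\<close> by auto
      then have "w k = cocol n G ! (k - l - 1)"
        using hi nth_map_upt[of "k - l - 1" "Suc n" "Suc l" w] by (simp del: upt_Suc)
      then show ?thesis using ucol_upper[OF G] False \<open>k \<in> {1..n}\<close> by simp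
    qed
  qed (simp add: permutes_not_in[OF w] ucol_outside[OF G])
qed

lemma increasing_on_blocksD:
  "increasing_on_blocks n l w \<Longrightarrow> 1 \<le> a \<Longrightarrow> a < b \<Longrightarrow> b \<le> n \<Longrightarrow> (a \<le> l \<longleftrightarrow> b \<le> l) \<Longrightarrow> w a < w b"
  unfolding increasing_on_blocks_def by blast

lemma ldescent_ucol_iff:
  assumes G: "G \<in> cols n l" and j: "1 \<le> j" "j < n"
  shows "ldescent j (ucol n G) \<longleftrightarrow> j \<notin> set G \<and> Suc j \<in> set G"
proof -
  have jr: "j \<in> {1..n}" "Suc j \<in> {1..n}" using j by auto
  define p q where "p = inv (ucol n G) j" and "q = inv (ucol n G) (Suc j)"
  note a = inv_ucolD[OF G jr(1), folded p_def] and b = inv_ucolD[OF G jr(2), folded q_def]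
  have "q < p \<longleftrightarrow> \<not> p \<le> l \<and> q \<le> l"
  proof (cases "p \<le> l \<longleftrightarrow> q \<le> l")
    case True
    have "p \<noteq> q" using a(2) b(2) by auto
    moreover have "\<not> q < p"
      using increasing_on_blocksD[OF increasing_on_blocks_ucol[OF G], of q p] a b True by auto
    ultimately have "p < q" by simp
    then show ?thesis using True by auto
  qed auto
  then show ?thesis unfolding ldescent_def p_def[symmetric] q_def[symmetric] using a(3) b(3) by simp
qed

lemma sref_in_atLeastAtMost: "1 \<le> j \<Longrightarrow> j < n \<Longrightarrow> x \<in> {1..n} \<Longrightarrow> sref j x \<in> {1..n}"
  using permutes_in_image[OF sref_permutes] by blast

lemma
  assumes G: "G \<in> cols n l" and j: "1 \<le> j" "j < n"
  shows scol_in_cols: "scol j G \<in> cols n l"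
    and set_scol: "set (scol j G) = sref j ` set G"
proof -
  show s: "set (scol j G) = sref j ` set G" unfolding scol_def by simp
  have "card (sref j ` set G) = l"
    using colsD(6)[OF G] card_image[of "sref j" "set G"] by (simp add: inj_on_def sref_eq_iff)
  moreover have "sref j ` set G \<subseteq> {1..n}" using colsD(4)[OF G] sref_in_atLeastAtMost[OF j] by blast
  ultimately show "scol j G \<in> cols n l"
    unfolding cols_def scol_def by (simp add: sorted_wrt_sorted_list_of_set)
qed

lemma scol_scol:
  assumes G: "G \<in> cols n l" and j: "1 \<le> j" "j < n"
  shows "scol j (scol j G) = G"
  using set_scol[OF scol_in_cols[OF G j] j] set_scol[OF G j]
    sorted_list_of_set_set_strict[OF colsD(1)[OF G]]
  unfolding scol_def[of j "scol j G"] by (simp add: image_image)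

lemma scol_eq_self_iff:
  assumes G: "G \<in> cols n l" and j: "1 \<le> j" "j < n"
  shows "scol j G = G \<longleftrightarrow> (j \<in> set G \<longleftrightarrow> Suc j \<in> set G)"
proof
  assume "scol j G = G"
  then have s: "sref j ` set G = set G" using set_scol[OF G j] by simp
  show "j \<in> set G \<longleftrightarrow> Suc j \<in> set G"
    using s[THEN equalityD1] s[THEN equalityD2] by (auto simp: sref_def)
next
  assume f: "j \<in> set G \<longleftrightarrow> Suc j \<in> set G"
  have "sref j ` set G = set G"
  proof (rule set_eqI)
    fix x show "x \<in> sref j ` set G \<longleftrightarrow> x \<in> set G"
      using f unfolding sref_def transpose_def by (auto simp: image_iff)
  qed
  then show "scol j G = G" unfolding scol_def using sorted_list_of_set_set_strict[OF colsD(1)[OF G]] by simp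
qed

lemma ucol_scol:
  assumes G: "G \<in> cols n l" and j: "1 \<le> j" "j < n" and ex: "(j \<in> set G) \<noteq> (Suc j \<in> set G)"
  shows "ucol n (scol j G) = sref j \<circ> ucol n G"
proof -
  have swap: "ucol n (scol j H) = sref j \<circ> ucol n H"
    if H: "H \<in> cols n l" and jin: "j \<in> set H" and jout: "Suc j \<notin> set H" for H
  proof (rule ucol_unique[OF scol_in_cols[OF H j], symmetric])
    have up: "ucol n H permutes {1..n}" using ucol_permutes[OF H] .
    show "sref j \<circ> ucol n H permutes {1..n}" using permutes_compose[OF up sref_permutes[OF j]] .
    show "(sref j \<circ> ucol n H) ` {1..l} = set (scol j H)"
      unfolding image_comp[symmetric] ucol_image_lower[OF H] set_scol[OF H j] ..
    show "increasing_on_blocks n l (sref j \<circ> ucol n H)"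
      unfolding increasing_on_blocks_def
    proof (intro allI impI)
      fix a b assume ab: "1 \<le> a" "a < b" "b \<le> n" "(a \<le> l) = (b \<le> l)"
      have lt: "ucol n H a < ucol n H b"
        using increasing_on_blocksD[OF increasing_on_blocks_ucol[OF H] ab] .
      have "(ucol n H a \<in> set H) = (ucol n H b \<in> set H)"
        using ucol_apply_in_iff[OF H, of a] ucol_apply_in_iff[OF H, of b] ab by auto
      then have "\<not> (ucol n H a = j \<and> ucol n H b = Suc j)" "\<not> (ucol n H a = Suc j \<and> ucol n H b = j)"
        using jin jout by auto
      then show "(sref j \<circ> ucol n H) a < (sref j \<circ> ucol n H) b"
        using sref_less_sref_iff[of "ucol n H a" "ucol n H b" j] lt by simp
    qed
  qed
  show ?thesis
  proof (cases "j \<in> set G")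
    case True
    then show ?thesis using swap[OF G] ex by simp
  next
    case False
    have "j \<in> set (scol j G)" "Suc j \<notin> set (scol j G)"
      using False ex unfolding set_scol[OF G j] by (auto simp: sref_def transpose_def image_iff)
    then have "ucol n G = sref j \<circ> ucol n (scol j G)"
      using swap[OF scol_in_cols[OF G j]] scol_scol[OF G j] by simp
    then show ?thesis by (simp add: comp_assoc[symmetric])
  qed
qed

lemma nth_scol:
  assumes G: "G \<in> cols n l" and j: "1 \<le> j" "j < n" and ex: "(j \<in> set G) \<noteq> (Suc j \<in> set G)"
    and r: "r < l"
  shows "scol j G ! r = sref j (G ! r)"
proof -
  have "ucol n (scol j G) (Suc r) = sref j (ucol n G (Suc r))" using ucol_scol[OF G j ex] by simp
  then show ?thesis
    using ucol_lower[OF G, of "Suc r"] ucol_lower[OF scol_in_cols[OF G j], of "Suc r"] r by simp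
qed

lemma
  assumes G: "G \<in> cols n l" and j: "1 \<le> j" "j < n"
  shows not_cle_scol_left: "j \<in> set G \<Longrightarrow> Suc j \<notin> set G \<Longrightarrow> \<not> cle (scol j G) G"
    and not_cle_scol_right: "j \<notin> set G \<Longrightarrow> Suc j \<in> set G \<Longrightarrow> \<not> cle G (scol j G)"
    and cle_scol_left: "j \<notin> set G \<Longrightarrow> Suc j \<in> set G \<Longrightarrow> cle (scol j G) G"
proof -
  have len: "length (scol j G) = length G" using colsD(3)[OF scol_in_cols[OF G j]] colsD(3)[OF G] by simp
  note nth = nth_scol[OF G j _ , unfolded colsD(3)[OF G, symmetric]]
  show "\<not> cle (scol j G) G" if jG: "j \<in> set G" "Suc j \<notin> set G"
  proof -
    obtain r where "r < length G" "G ! r = j" using jG(1) by (auto simp: in_set_conv_nth)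
    then show ?thesis using nth[of r] jG unfolding cle_def by (auto simp: sref_def)
  qed
  show "\<not> cle G (scol j G)" if jG: "j \<notin> set G" "Suc j \<in> set G"
  proof -
    obtain r where "r < length G" "G ! r = Suc j" using jG(2) by (auto simp: in_set_conv_nth)
    then show ?thesis using nth[of r] jG unfolding cle_def by (auto simp: sref_def)
  qed
  show "cle (scol j G) G" if jG: "j \<notin> set G" "Suc j \<in> set G"
    unfolding cle_def
  proof (intro conjI allI impI)
    fix r assume "r < length (scol j G)"
    then have "r < length G" "G ! r \<noteq> j" using jG(1) len nth_mem by force+
    then show "scol j G ! r \<le> G ! r" using nth[of r] jG by (auto simp: sref_def transpose_def)
  qed (rule len)
qed

text \<open>When \<open>s\<^sub>j\<close> fixes the column \<open>G\<close>, it lifts through \<open>u\<^sub>G\<close> to a simple reflection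
  \<open>s\<^sub>k\<close> in the stabiliser.\<close>

lemma ucol_sref_commute:
  assumes G: "G \<in> cols n l" and j: "1 \<le> j" "j < n" and f: "j \<in> set G \<longleftrightarrow> Suc j \<in> set G"
  obtains k where "1 \<le> k" "k < n" "k \<noteq> l" "sref j \<circ> ucol n G = ucol n G \<circ> sref k"
    "\<not> ldescent j (ucol n G)" "\<not> rdescent k (ucol n G)"
    "inv (ucol n G) j = k" "inv (ucol n G) (Suc j) = Suc k"
proof -
  define u where "u = ucol n G"
  have up: "u permutes {1..n}" unfolding u_def by (rule ucol_permutes[OF G])
  have jr: "j \<in> {1..n}" "Suc j \<in> {1..n}" using j by auto
  define k k' where "k = inv u j" and "k' = inv u (Suc j)"
  have kr: "k \<in> {1..n}" "k' \<in> {1..n}" "u k = j" "u k' = Suc j"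
    using inv_ucolD(1,2)[OF G jr(1)] inv_ucolD(1,2)[OF G jr(2)] unfolding k_def k'_def u_def by auto
  have sb: "k \<le> l \<longleftrightarrow> k' \<le> l"
    using inv_ucolD(3)[OF G jr(1)] inv_ucolD(3)[OF G jr(2)] f unfolding k_def k'_def u_def by auto
  note inc = increasing_on_blocksD[OF increasing_on_blocks_ucol[OF G], folded u_def]
  \<comment> \<open>\<open>u\<close> is increasing on the block containing \<open>k, k'\<close>, and \<open>u k' = u k + 1\<close>.\<close>
  have "k < k'"
  proof (rule ccontr)
    assume "\<not> k < k'"
    moreover have "k \<noteq> k'" using kr by auto
    ultimately have "u k' < u k" using inc[of k' k] kr sb by auto
    then show False using kr by simp
  qed
  have kk: "k' = Suc k"
  proof (rule ccontr)
    assume "k' \<noteq> Suc k"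
    then have lt: "Suc k < k'" using \<open>k < k'\<close> by simp
    then have "u k < u (Suc k)" "u (Suc k) < u k'" using inc[of k "Suc k"] inc[of "Suc k" k'] kr sb by auto
    then show False using kr by simp
  qed
  have "{u k, u (Suc k)} = {j, Suc j}" using kr kk by simp
  note sc = sref_comp_eq_comp_sref[OF up this]
  show ?thesis
  proof (rule that[of k])
    show "1 \<le> k" "k < n" "k \<noteq> l" using kr kk sb by auto
    show "\<not> rdescent k (ucol n G)" unfolding rdescent_def u_def[symmetric] using kr kk by simp
    show "\<not> ldescent j (ucol n G)"
      unfolding ldescent_def u_def[symmetric] using k_def k'_def kk by simp
    show "sref j \<circ> ucol n G = ucol n G \<circ> sref k" using sc(1) unfolding u_def .
    show "inv (ucol n G) j = k" "inv (ucol n G) (Suc j) = Suc k"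
      using k_def k'_def kk unfolding u_def by simp_all
  qed
qed

section \<open>The parabolic decomposition \<open>H\<^sub>n = \<Sum>\<^sub>F T\<^bsub>u\<^sub>F\<^esub> H\<^sub>n\<^sub>,\<^sub>l\<close>\<close>

lemma Stab_in_Sn: "v \<in> Stab n l \<Longrightarrow> v \<in> Sn n"
  unfolding Stab_def by simp

lemma comp_in_Stab:
  assumes "u \<in> Stab n l" "v \<in> Stab n l"
  shows "u \<circ> v \<in> Stab n l"
proof -
  have "(u \<circ> v) ` {1..l} = u ` (v ` {1..l})" by (rule image_comp[symmetric])
  then show ?thesis using assms comp_in_Sn[of u n v] unfolding Stab_def by simp
qed

lemma sref_in_Stab: "1 \<le> k \<Longrightarrow> k < n \<Longrightarrow> k \<noteq> l \<Longrightarrow> sref k \<in> Stab n l"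
  unfolding Stab_def using sref_in_Sn[of k n] by (auto simp: sref_def transpose_def image_iff)

lemma sref_comp_in_Stab_iff:
  "1 \<le> k \<Longrightarrow> k < n \<Longrightarrow> k \<noteq> l \<Longrightarrow> sref k \<circ> v \<in> Stab n l \<longleftrightarrow> v \<in> Stab n l"
  using comp_in_Stab[OF sref_in_Stab, of k n l] by (metis comp_assoc id_comp sref_comp_sref)

lemma Stab_apply_le_iff:
  assumes v: "v \<in> Stab n l" and x: "x \<in> {1..n}"
  shows "v x \<le> l \<longleftrightarrow> x \<le> l"
proof -
  have vp: "v permutes {1..n}" and im: "v ` {1..l} = {1..l}" using v unfolding Stab_def Sn_def by auto
  have "v x \<in> {1..n}" using permutes_in_image[OF vp] x by simp
  moreover have "v x \<in> v ` {1..l} \<longleftrightarrow> x \<in> {1..l}" using permutes_inj[OF vp] by (auto simp: inj_eq)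
  ultimately show ?thesis using x unfolding im by auto
qed

lemma Stab_inv_apply_le_iff:
  assumes v: "v \<in> Stab n l" and x: "x \<in> {1..n}"
  shows "inv v x \<le> l \<longleftrightarrow> x \<le> l"
proof -
  have vp: "v permutes {1..n}" using v unfolding Stab_def Sn_def by auto
  show ?thesis
    using Stab_apply_le_iff[OF v, of "inv v x"] permutes_in_image[OF permutes_inv[OF vp]] x
      permutes_inverses(1)[OF vp] by simp
qed

lemma ldescent_ucol_comp_Stab:
  assumes G: "G \<in> cols n l" and v: "v \<in> Stab n l" and j: "1 \<le> j" "j < n"
    and ex: "(j \<in> set G) \<noteq> (Suc j \<in> set G)"
  shows "ldescent j (ucol n G \<circ> v) \<longleftrightarrow> Suc j \<in> set G"
proof -
  have "inv (ucol n G \<circ> v) = inv v \<circ> inv (ucol n G)"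
    using Stab_in_Sn[OF v] o_inv_distrib[OF permutes_bij[OF ucol_permutes[OF G]] permutes_bij]
    by (simp add: mem_Sn_iff)
  moreover have jr: "j \<in> {1..n}" "Suc j \<in> {1..n}" using j by auto
  ultimately show ?thesis
    unfolding ldescent_def
    using Stab_inv_apply_le_iff[OF v inv_ucolD(1)[OF G jr(1)]] inv_ucolD(3)[OF G jr(1)]
      Stab_inv_apply_le_iff[OF v inv_ucolD(1)[OF G jr(2)]] inv_ucolD(3)[OF G jr(2)] ex
    by auto
qed

lemma plen_comp_le:
  assumes u: "u \<in> Sn n" and v: "v \<in> Sn n"
  shows "plen n (u \<circ> v) \<le> plen n u + plen n v"
  using v
proof (induction "plen n v" arbitrary: v rule: less_induct)
  case less
  have vp: "v permutes {1..n}" using less.prems by (simp add: mem_Sn_iff)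
  show ?case
  proof (cases "v = id")
    case False
    obtain k where k: "1 \<le> k" "k < n" "rdescent k v" using rdescent_exists[OF vp False] .
    define v' where "v' = v \<circ> sref k"
    have v': "v' \<in> Sn n" unfolding v'_def using comp_in_Sn[OF less.prems sref_in_Sn[OF k(1,2)]] .
    have pl: "plen n v = Suc (plen n v')"
      using plen_comp_sref[OF vp k(1,2)] plen_pos_if_rdescent[OF vp k] k(3) unfolding v'_def by simp
    have "u \<circ> v = (u \<circ> v') \<circ> sref k" unfolding v'_def by (simp add: comp_assoc)
    then have "plen n (u \<circ> v) \<le> Suc (plen n (u \<circ> v'))"
      using plen_comp_sref[of "u \<circ> v'" n k] comp_in_Sn[OF u v'] k(1,2)
      by (cases "rdescent k (u \<circ> v')") (simp_all add: mem_Sn_iff)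
    then show ?thesis using less.hyps[OF _ v'] pl by simp
  qed simp
qed

lemma hop_hT_eq_if_plen_add:
  assumes u: "u \<in> Sn n" and v: "v \<in> Sn n" and add: "plen n (u \<circ> v) = plen n u + plen n v"
  shows "hop n t u (hT v) = hT (u \<circ> v)"
  using v add
proof (induction "plen n v" arbitrary: v rule: less_induct)
  case less
  show ?case
  proof (cases "v = id")
    case True then show ?thesis using hop_hT_id[OF u] by simp
  next
    case False
    have vp: "v permutes {1..n}" using less.prems by (simp add: mem_Sn_iff)
    obtain k where k: "1 \<le> k" "k < n" "rdescent k v" using rdescent_exists[OF vp False] .
    define v' where "v' = v \<circ> sref k"
    have v': "v' \<in> Sn n" unfolding v'_def using comp_in_Sn[OF less.prems(1) sref_in_Sn[OF k(1,2)]] .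
    have vv: "v = v' \<circ> sref k" unfolding v'_def by (simp add: comp_assoc)
    have ndv': "\<not> rdescent k v'" unfolding v'_def using rdescent_comp_sref[OF vp] k(3) by simp
    have pl: "plen n v = Suc (plen n v')"
      using plen_comp_sref[OF vp k(1,2)] plen_pos_if_rdescent[OF vp k] k(3) unfolding v'_def by simp
    have uv': "u \<circ> v' permutes {1..n}" using comp_in_Sn[OF u v'] by (simp add: mem_Sn_iff)
    have e: "u \<circ> v = (u \<circ> v') \<circ> sref k" unfolding vv by (simp add: comp_assoc)
    have "plen n (u \<circ> v) \<le> Suc (plen n (u \<circ> v'))"
      unfolding e using plen_comp_sref[OF uv' k(1,2)] by (cases "rdescent k (u \<circ> v')") simp_all
    then have add': "plen n (u \<circ> v') = plen n u + plen n v'"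
      using plen_comp_le[OF u v'] less.prems(2) pl by simp
    have nd: "\<not> rdescent k (u \<circ> v')"
      using plen_comp_sref[OF uv' k(1,2)] add' less.prems(2) pl unfolding e[symmetric] by auto
    have "hT v = Rgen t k (hT v')" using Rgen_hT[OF v' k(1,2) ndv', of t] vv by simp
    then have "hop n t u (hT v) = Rgen t k (hop n t u (hT v'))"
      using Rgen_equivariantD[OF Rgen_equivariant_hop[OF u] k(1,2) hT_in_Hn[OF v']] by simp
    also have "\<dots> = hT (u \<circ> v)"
      using less.hyps[OF _ v' add'] pl Rgen_hT[OF comp_in_Sn[OF u v'] k(1,2) nd] e by simp
    finally show ?thesis .
  qed
qed

lemma plen_ucol_comp_Stab:
  assumes G: "G \<in> cols n l" and v: "v \<in> Stab n l"
  shows "plen n (ucol n G \<circ> v) = plen n (ucol n G) + plen n v"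
  using v
proof (induction "plen n v" arbitrary: v rule: less_induct)
  case less
  have vp: "v permutes {1..n}" using Stab_in_Sn[OF less.prems] by (simp add: mem_Sn_iff)
  show ?case
  proof (cases "v = id")
    case False
    obtain k where k: "1 \<le> k" "k < n" "rdescent k v" using rdescent_exists[OF vp False] .
    have kr: "k \<in> {1..n}" "Suc k \<in> {1..n}" using k by auto
    have kl: "k \<noteq> l"
      using Stab_apply_le_iff[OF less.prems kr(1)] Stab_apply_le_iff[OF less.prems kr(2)] k(3)
      unfolding rdescent_def by auto
    define v' where "v' = v \<circ> sref k"
    have v': "v' \<in> Stab n l" unfolding v'_def using comp_in_Stab[OF less.prems sref_in_Stab[OF k(1,2) kl]] .
    have v'p: "v' permutes {1..n}" using Stab_in_Sn[OF v'] by (simp add: mem_Sn_iff)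
    have pl: "plen n v = Suc (plen n v')"
      using plen_comp_sref[OF vp k(1,2)] plen_pos_if_rdescent[OF vp k] k(3) unfolding v'_def by simp
    define u where "u = ucol n G"
    have uv': "u \<circ> v' permutes {1..n}"
      using comp_in_Sn[OF ucol_in_Sn[OF G] Stab_in_Sn[OF v']] unfolding u_def by (simp add: mem_Sn_iff)
    have e: "u \<circ> v = (u \<circ> v') \<circ> sref k" unfolding v'_def by (simp add: comp_assoc)
    \<comment> \<open>\<open>v' k < v' (k+1)\<close> lie in one block of \<open>u\<close>, where \<open>u\<close> is increasing.\<close>
    have "v' k < v' (Suc k)" using k(3) unfolding v'_def rdescent_def by (simp add: sref_def)
    moreover have "v' k \<in> {1..n}" "v' (Suc k) \<in> {1..n}" using permutes_in_image[OF v'p] kr by auto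
    moreover have "v' k \<le> l \<longleftrightarrow> v' (Suc k) \<le> l"
      using Stab_apply_le_iff[OF v' kr(1)] Stab_apply_le_iff[OF v' kr(2)] kl by auto
    ultimately have "u (v' k) < u (v' (Suc k))"
      using increasing_on_blocksD[OF increasing_on_blocks_ucol[OF G], of "v' k" "v' (Suc k)"]
      unfolding u_def by auto
    then have "\<not> rdescent k (u \<circ> v')" unfolding rdescent_def by simp
    then have "plen n (u \<circ> v) = Suc (plen n (u \<circ> v'))"
      unfolding e using plen_comp_sref[OF uv' k(1,2)] by simp
    then show ?thesis using less.hyps[OF _ v'] pl u_def by simp
  qed simp
qed

definition col_of :: "nat \<Rightarrow> perm \<Rightarrow> nat list" where
  "col_of l x = sorted_list_of_set (x ` {1..l})"

lemma col_of_in_cols: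
  assumes x: "x \<in> Sn n" and l: "l \<le> n"
  shows "col_of l x \<in> cols n l"
proof -
  have xp: "x permutes {1..n}" using x by (simp add: mem_Sn_iff)
  have "x ` {1..l} \<subseteq> {1..n}" using permutes_image[OF xp] l by auto
  moreover have "card (x ` {1..l}) = l" using card_image[OF permutes_inj_on[OF xp]] by simp
  ultimately show ?thesis unfolding cols_def col_of_def by (simp add: sorted_wrt_sorted_list_of_set)
qed

lemma col_of_ucol_comp:
  assumes G: "G \<in> cols n l" and v: "v \<in> Stab n l"
  shows "col_of l (ucol n G \<circ> v) = G"
proof -
  have "(ucol n G \<circ> v) ` {1..l} = ucol n G ` (v ` {1..l})" by (rule image_comp[symmetric])
  also have "\<dots> = set G" using v ucol_image_lower[OF G] unfolding Stab_def by simp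
  finally show ?thesis unfolding col_of_def using sorted_list_of_set_set_strict[OF colsD(1)[OF G]] by simp
qed

lemma inv_ucol_comp_in_Stab_iff:
  assumes G: "G \<in> cols n l" and x: "x \<in> Sn n"
  shows "inv (ucol n G) \<circ> x \<in> Stab n l \<longleftrightarrow> col_of l x = G"
proof
  have e: "ucol n G \<circ> (inv (ucol n G) \<circ> x) = x"
    using permutes_inverses(1)[OF ucol_permutes[OF G]] by (simp add: fun_eq_iff)
  show "inv (ucol n G) \<circ> x \<in> Stab n l \<Longrightarrow> col_of l x = G"
    using col_of_ucol_comp[OF G] e by metis
  assume c: "col_of l x = G"
  define u where "u = ucol n G"
  have up: "u permutes {1..n}" unfolding u_def by (rule ucol_permutes[OF G])
  have "u ` {1..l} = set G" unfolding u_def by (rule ucol_image_lower[OF G])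
  also have "\<dots> = x ` {1..l}" unfolding c[symmetric] col_of_def by simp
  finally have "u ` {1..l} = x ` {1..l}" .
  then have "(inv u \<circ> x) ` {1..l} = inv u ` (u ` {1..l})" by (simp add: image_comp)
  also have "\<dots> = {1..l}" using permutes_inverses(2)[OF up] by (simp add: image_comp)
  finally show "inv (ucol n G) \<circ> x \<in> Stab n l"
    using comp_in_Sn[OF inv_in_Sn[OF ucol_in_Sn[OF G]] x] unfolding Stab_def u_def by simp
qed

lemma Hsub_subset_Hn: "g \<in> Hsub n l \<Longrightarrow> g \<in> Hn n"
  unfolding Hsub_def Hn_def Stab_def by auto

text \<open>Left multiplication by \<open>T\<^bsub>u\<^sub>G\<^esub>\<close> just translates \<open>H\<^sub>n\<^sub>,\<^sub>l\<close>, since lengths add on \<open>u\<^sub>G S\<^sub>n\<^sub>,\<^sub>l\<close>.\<close>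

lemma hmul_hT_ucol:
  assumes G: "G \<in> cols n l" and g: "g \<in> Hsub n l"
  shows "hmul n t (hT (ucol n G)) g x = g (inv (ucol n G) \<circ> x)"
proof -
  define u where "u = ucol n G"
  have uS: "u \<in> Sn n" unfolding u_def using ucol_in_Sn[OF G] .
  have up: "u permutes {1..n}" unfolding u_def using ucol_permutes[OF G] .
  have gH: "g \<in> Hn n" using Hsub_subset_Hn[OF g] .
  have gz: "g y = 0" if "y \<notin> Stab n l" for y using g that unfolding Hsub_def by auto
  have "hmul n t (hT u) g x = (\<Sum>y\<in>Sn n. g y * hop n t u (hT y) x)"
    using hmul_hT_left[OF uS, where t=t] hlinearD(1)[OF hlinear_hop[OF uS, where t=t] gH] by simp
  also have "\<dots> = (\<Sum>y\<in>Sn n. if y = inv u \<circ> x then g y else 0)"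
  proof (rule sum.cong[OF refl])
    fix y assume y: "y \<in> Sn n"
    have eq: "u \<circ> y = x \<longleftrightarrow> y = inv u \<circ> x"
      using permutes_inverses[OF up] by (auto simp: fun_eq_iff) (metis permutes_inverses(2)[OF up])
    show "g y * hop n t u (hT y) x = (if y = inv u \<circ> x then g y else 0)"
    proof (cases "y \<in> Stab n l")
      case True
      then have "hop n t u (hT y) = hT (u \<circ> y)"
        using hop_hT_eq_if_plen_add[OF uS y] plen_ucol_comp_Stab[OF G True] unfolding u_def by simp
      then show ?thesis using eq by (auto simp: hT_def)
    qed (auto simp: gz)
  qed
  also have "\<dots> = g (inv u \<circ> x)" using HnD[OF gH] by (simp add: sum.delta')
  finally show ?thesis unfolding u_def .
qed

definition hcomponent :: "nat \<Rightarrow> nat \<Rightarrow> 'a::comm_ring_1 hecke \<Rightarrow> nat list \<Rightarrow> 'a hecke" where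
  "hcomponent n l X G = (\<lambda>v. if v \<in> Stab n l then X (ucol n G \<circ> v) else 0)"

lemma hcomponent_in_Hsub: "hcomponent n l X G \<in> Hsub n l"
  unfolding hcomponent_def Hsub_def by simp

lemma hcomponent_in_Hn: "hcomponent n l X G \<in> Hn n"
  using Hsub_subset_Hn[OF hcomponent_in_Hsub] .

lemma sum_eq_single:
  assumes "finite A" "a \<in> A" "\<And>x. x \<in> A \<Longrightarrow> x \<noteq> a \<Longrightarrow> f x = 0"
  shows "sum f A = f a"
  using sum.remove[OF assms(1,2), of f] sum.neutral[of "A - {a}" f] assms(3) by simp

text \<open>\<open>X x\<close> only sees the component of the column spanned by \<open>x ` {1..l}\<close>.\<close>

lemma sum_component_eq:
  assumes f: "\<And>F. F \<in> cols n l \<Longrightarrow> f F \<in> Hsub n l" and x: "x \<in> Sn n" and l: "l \<le> n"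
  shows "(\<Sum>F\<in>cols n l. hmul n t (hT (ucol n F)) (f F) x) = f (col_of l x) (inv (ucol n (col_of l x)) \<circ> x)"
proof -
  have "(\<Sum>F\<in>cols n l. hmul n t (hT (ucol n F)) (f F) x) = (\<Sum>F\<in>cols n l. f F (inv (ucol n F) \<circ> x))"
    using f by (intro sum.cong) (simp_all add: hmul_hT_ucol)
  also have "\<dots> = f (col_of l x) (inv (ucol n (col_of l x)) \<circ> x)"
  proof (rule sum_eq_single[OF finite_cols col_of_in_cols[OF x l]])
    fix F assume F: "F \<in> cols n l" "F \<noteq> col_of l x"
    then have "inv (ucol n F) \<circ> x \<notin> Stab n l" using inv_ucol_comp_in_Stab_iff[OF F(1) x] by simp
    then show "f F (inv (ucol n F) \<circ> x) = 0" using f[OF F(1)] unfolding Hsub_def by blast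
  qed
  finally show ?thesis .
qed

lemma inv_ucol_comp_notin_Stab:
  assumes F: "F \<in> cols n l" and x: "x \<notin> Sn n"
  shows "inv (ucol n F) \<circ> x \<notin> Stab n l"
proof
  assume "inv (ucol n F) \<circ> x \<in> Stab n l"
  then have "ucol n F \<circ> (inv (ucol n F) \<circ> x) \<in> Sn n"
    using comp_in_Sn[OF ucol_in_Sn[OF F] Stab_in_Sn] by blast
  moreover have "ucol n F \<circ> (inv (ucol n F) \<circ> x) = x"
    using permutes_inverses(1)[OF ucol_permutes[OF F]] by (simp add: fun_eq_iff)
  ultimately show False using x by simp
qed

lemma sum_hcomponent_eq:
  assumes X: "X \<in> Hn n" and l: "l \<le> n"
  shows "(\<Sum>F\<in>cols n l. hmul n t (hT (ucol n F)) (hcomponent n l X F) x) = X x"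
proof (cases "x \<in> Sn n")
  case True
  have G: "col_of l x \<in> cols n l" using col_of_in_cols[OF True l] .
  have "ucol n (col_of l x) \<circ> (inv (ucol n (col_of l x)) \<circ> x) = x"
    using permutes_inverses(1)[OF ucol_permutes[OF G]] by (simp add: fun_eq_iff)
  then show ?thesis
    unfolding sum_component_eq[OF hcomponent_in_Hsub True l]
    using inv_ucol_comp_in_Stab_iff[OF G True] by (simp add: hcomponent_def)
next
  case False
  have "hmul n t (hT (ucol n F)) (hcomponent n l X F) x = 0" if "F \<in> cols n l" for F
    using hmul_hT_ucol[OF that hcomponent_in_Hsub[of n l X F], of t x] inv_ucol_comp_notin_Stab[OF that False]
    by (simp add: hcomponent_def)
  then have "(\<Sum>F\<in>cols n l. hmul n t (hT (ucol n F)) (hcomponent n l X F) x) = 0"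
    by (intro sum.neutral) blast
  then show ?thesis using HnD[OF X False] by simp
qed

lemma hcomponent_unique:
  assumes f: "\<And>F. F \<in> cols n l \<Longrightarrow> f F \<in> Hsub n l"
    and X: "\<And>x. X x = (\<Sum>F\<in>cols n l. hmul n t (hT (ucol n F)) (f F) x)"
    and F: "F \<in> cols n l" and l: "l \<le> n"
  shows "f F = hcomponent n l X F"
proof
  fix v
  show "f F v = hcomponent n l X F v"
  proof (cases "v \<in> Stab n l")
    case True
    define x where "x = ucol n F \<circ> v"
    have xS: "x \<in> Sn n" unfolding x_def using comp_in_Sn[OF ucol_in_Sn[OF F] Stab_in_Sn[OF True]] .
    have "col_of l x = F" unfolding x_def using col_of_ucol_comp[OF F True] .
    moreover have "inv (ucol n F) \<circ> x = v"
      unfolding x_def using permutes_inverses(2)[OF ucol_permutes[OF F]] by (simp add: fun_eq_iff)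
    ultimately have "X x = f F v" using X sum_component_eq[OF f xS l] by simp
    then show ?thesis using True unfolding hcomponent_def x_def by simp
  qed (use f[OF F] in \<open>simp add: Hsub_def hcomponent_def\<close>)
qed

lemma hdec_eq_hcomponent:
  assumes X: "X \<in> Hn n" and l: "l \<le> n"
  shows "hdec n t l X = (\<lambda>F. if F \<in> cols n l then hcomponent n l X F else (\<lambda>_. 0))"
    (is "_ = ?f")
  unfolding hdec_def
proof (rule the_equality)
  have "(\<Sum>F\<in>cols n l. hmul n t (hT (ucol n F)) (?f F) x) = X x" for x
    using sum_hcomponent_eq[OF X l, of t x] by (simp cong: sum.cong)
  then show "(\<forall>F. F \<notin> cols n l \<longrightarrow> ?f F = (\<lambda>_. 0)) \<and> (\<forall>F\<in>cols n l. ?f F \<in> Hsub n l) \<and>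
      (\<forall>x. X x = (\<Sum>F\<in>cols n l. hmul n t (hT (ucol n F)) (?f F) x))"
    by (simp add: hcomponent_in_Hsub)
next
  fix f assume "(\<forall>F. F \<notin> cols n l \<longrightarrow> f F = (\<lambda>_. 0)) \<and> (\<forall>F\<in>cols n l. f F \<in> Hsub n l) \<and>
      (\<forall>x. X x = (\<Sum>F\<in>cols n l. hmul n t (hT (ucol n F)) (f F) x))"
  then show "f = ?f" using hcomponent_unique[of n l f X t _] l by (auto simp: fun_eq_iff)
qed

section \<open>The recursion for \<open>\<Psi>\<close>\<close>

lemma hcomponent_lincomb:
  "hcomponent n l (\<lambda>x. a * X x + c * Y x) F = (\<lambda>v. a * hcomponent n l X F v + c * hcomponent n l Y F v)"
  unfolding hcomponent_def by auto

lemma hcomponent_Lgen_up: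
  assumes G: "G \<in> cols n l" and j: "1 \<le> j" "j < n" and a: "j \<in> set G" "Suc j \<notin> set G"
  shows "hcomponent n l (Lgen t j X) G = (\<lambda>v. t * hcomponent n l X (scol j G) v)"
proof
  fix v show "hcomponent n l (Lgen t j X) G v = t * hcomponent n l X (scol j G) v"
  proof (cases "v \<in> Stab n l")
    case True
    then have "\<not> ldescent j (ucol n G \<circ> v)" using ldescent_ucol_comp_Stab[OF G True j] a by simp
    moreover have "sref j \<circ> (ucol n G \<circ> v) = ucol n (scol j G) \<circ> v"
      using ucol_scol[OF G j] a by (simp add: comp_assoc)
    ultimately show ?thesis unfolding hcomponent_def Lgen_def using True by simp
  qed (simp add: hcomponent_def)
qed

lemma hcomponent_Lgen_down:
  assumes G: "G \<in> cols n l" and j: "1 \<le> j" "j < n" and a: "j \<notin> set G" "Suc j \<in> set G"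
  shows "hcomponent n l (Lgen t j X) G =
    (\<lambda>v. hcomponent n l X (scol j G) v + (t - 1) * hcomponent n l X G v)"
proof
  fix v show "hcomponent n l (Lgen t j X) G v = hcomponent n l X (scol j G) v + (t - 1) * hcomponent n l X G v"
  proof (cases "v \<in> Stab n l")
    case True
    then have "ldescent j (ucol n G \<circ> v)" using ldescent_ucol_comp_Stab[OF G True j] a by simp
    moreover have "sref j \<circ> (ucol n G \<circ> v) = ucol n (scol j G) \<circ> v"
      using ucol_scol[OF G j] a by (simp add: comp_assoc)
    ultimately show ?thesis unfolding hcomponent_def Lgen_def using True by simp
  qed (simp add: hcomponent_def)
qed

lemma hcomponent_Lgen_fixed:
  assumes G: "G \<in> cols n l" and k: "1 \<le> k" "k < n" "k \<noteq> l"
    and sc: "sref j \<circ> ucol n G = ucol n G \<circ> sref k"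
    and ik: "inv (ucol n G) j = k" "inv (ucol n G) (Suc j) = Suc k"
  shows "hcomponent n l (Lgen t j X) G = Lgen t k (hcomponent n l X G)"
proof
  fix v
  show "hcomponent n l (Lgen t j X) G v = Lgen t k (hcomponent n l X G) v"
  proof (cases "v \<in> Stab n l")
    case True
    have vp: "v permutes {1..n}" using Stab_in_Sn[OF True] by (simp add: mem_Sn_iff)
    have "inv (ucol n G \<circ> v) = inv v \<circ> inv (ucol n G)"
      using o_inv_distrib[OF permutes_bij[OF ucol_permutes[OF G]] permutes_bij[OF vp]] .
    then have "ldescent j (ucol n G \<circ> v) \<longleftrightarrow> ldescent k v" unfolding ldescent_def using ik by simp
    moreover have "sref j \<circ> (ucol n G \<circ> v) = ucol n G \<circ> (sref k \<circ> v)"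
      using sc by (simp add: comp_assoc[symmetric])
    ultimately show ?thesis
      unfolding hcomponent_def Lgen_def using True sref_comp_in_Stab_iff[OF k] by simp
  qed (simp add: hcomponent_def Lgen_def sref_comp_in_Stab_iff[OF k])
qed

definition Psi_step :: "nat \<Rightarrow> 'a::comm_ring_1 \<Rightarrow> nat \<Rightarrow> 'a hecke \<Rightarrow> nat list \<Rightarrow> 'a hecke" where
  "Psi_step n t l X F = hmul n t (theta n t (ucol n F)) (hcomponent n l X F)"

lemma Lgen_hmul_theta_fixed:
  assumes F: "F \<in> cols n l" and j: "1 \<le> j" "j < n" and D: "D \<in> Hn n" and ti: "t * ti = 1"
    and k: "1 \<le> k" "k < n" and sc: "sref j \<circ> ucol n F = ucol n F \<circ> sref k"
    and nd: "\<not> ldescent j (ucol n F)" "\<not> rdescent k (ucol n F)"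
  shows "Lgen t j (hmul n t (theta n t (ucol n F)) D) = hmul n t (theta n t (ucol n F)) (Lgen t k D)"
proof -
  define th where "th = theta n t (ucol n F)"
  have uS: "ucol n F \<in> Sn n" using ucol_in_Sn[OF F] .
  have th: "th \<in> Hn n" unfolding th_def using theta_in_Hn[OF uS ti] .
  have "Lgen t j (hmul n t th D) = hmul n t (hmul n t (hT (sref j)) th) D"
    using hmul_hT_sref_left[OF j hmul_in_Hn[OF D]] hmul_assoc[OF hT_in_Hn[OF sref_in_Sn[OF j]] th D] by simp
  also have "\<dots> = hmul n t (hmul n t th (hT (sref k))) D"
    unfolding th_def using hmul_hT_sref_theta[OF uS j k sc nd ti] by simp
  also have "\<dots> = hmul n t th (Lgen t k D)"
    using hmul_assoc[OF th hT_in_Hn[OF sref_in_Sn[OF k]] D] hmul_hT_sref_left[OF k D] by simp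
  finally show ?thesis unfolding th_def .
qed

lemma Lgen_Psi_step_fixed:
  assumes F: "F \<in> cols n l" and j: "1 \<le> j" "j < n" and e: "scol j F = F" and ti: "t * ti = 1"
  shows "Lgen t j (Psi_step n t l X F) = Psi_step n t l (Lgen t j X) F"
proof -
  obtain k where k: "1 \<le> k" "k < n" "k \<noteq> l" and sc: "sref j \<circ> ucol n F = ucol n F \<circ> sref k"
    and nd: "\<not> ldescent j (ucol n F)" "\<not> rdescent k (ucol n F)"
    and ik: "inv (ucol n F) j = k" "inv (ucol n F) (Suc j) = Suc k"
    using ucol_sref_commute[OF F j] scol_eq_self_iff[OF F j] e by metis
  show ?thesis
    unfolding Psi_step_def Lgen_hmul_theta_fixed[OF F j hcomponent_in_Hn ti k(1,2) sc nd]
      hcomponent_Lgen_fixed[OF F k sc ik] ..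
qed

lemma Lgen_hmul_theta_up:
  assumes F: "F \<in> cols n l" and j: "1 \<le> j" "j < n" and a: "j \<in> set F" "Suc j \<notin> set F"
    and ti: "t * ti = 1" and D: "D \<in> Hn n"
  shows "Lgen t j (hmul n t (theta n t (ucol n (scol j F))) D) = (\<lambda>x. t * hmul n t (theta n t (ucol n F)) D x)"
proof -
  have uS: "ucol n F \<in> Sn n" using ucol_in_Sn[OF F] .
  define th where "th = theta n t (ucol n F)"
  have th: "th \<in> Hn n" unfolding th_def using theta_in_Hn[OF uS ti] .
  have nd: "\<not> ldescent j (ucol n F)" using ldescent_ucol_iff[OF F j] a by simp
  have "Lgen t j (hmul n t (theta n t (ucol n (scol j F))) D)
      = hmul n t (hT (sref j)) (hmul n t (hmul n t (Tplus t j) th) D)"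
    using ucol_scol[OF F j] a theta_sref_comp[OF uS j nd ti]
      hmul_hT_sref_left[OF j hmul_in_Hn[OF D]] unfolding th_def by simp
  also have "\<dots> = hmul n t (hmul n t (hmul n t (hT (sref j)) (Tplus t j)) th) D"
    using hmul_assoc[OF hT_in_Hn[OF sref_in_Sn[OF j]] hmul_in_Hn[OF th] D]
      hmul_assoc[OF hT_in_Hn[OF sref_in_Sn[OF j]] Tplus_in_Hn[OF j] th] by simp
  also have "\<dots> = (\<lambda>x. t * hmul n t th D x)"
    unfolding hmul_hT_sref_Tplus[OF j] hmul_smult_left hmul_hone_left[OF th] ..
  finally show ?thesis unfolding th_def .
qed

lemma hmul_theta_down:
  assumes F: "F \<in> cols n l" and j: "1 \<le> j" "j < n" and a: "j \<notin> set F" "Suc j \<in> set F"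
    and ti: "t * ti = 1" and D: "D \<in> Hn n"
  defines "Z \<equiv> hmul n t (theta n t (ucol n (scol j F))) D"
  shows "hmul n t (theta n t (ucol n F)) D = (\<lambda>x. Lgen t j Z x + (1 - t) * Z x)"
proof -
  have F': "scol j F \<in> cols n l" using scol_in_cols[OF F j] .
  have uS: "ucol n (scol j F) \<in> Sn n" using ucol_in_Sn[OF F'] .
  have th: "theta n t (ucol n (scol j F)) \<in> Hn n" using theta_in_Hn[OF uS ti] .
  have "j \<in> set (scol j F)" "Suc j \<notin> set (scol j F)"
    using a unfolding set_scol[OF F j] by (auto simp: sref_def transpose_def image_iff)
  then have "\<not> ldescent j (ucol n (scol j F))" using ldescent_ucol_iff[OF F' j] by simp
  moreover have "ucol n F = sref j \<circ> ucol n (scol j F)"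
    using ucol_scol[OF F j] a by (simp add: comp_assoc[symmetric])
  ultimately have "theta n t (ucol n F) = hmul n t (Tplus t j) (theta n t (ucol n (scol j F)))"
    using theta_sref_comp[OF uS j _ ti] by simp
  then have "hmul n t (theta n t (ucol n F)) D = hmul n t (Tplus t j) Z"
    unfolding Z_def using hmul_assoc[OF Tplus_in_Hn[OF j] th D] by simp
  also have "\<dots> = (\<lambda>x. Lgen t j Z x + (1 - t) * Z x)"
    unfolding Z_def by (rule hmul_Tplus_left[OF j hmul_in_Hn[OF D]])
  finally show ?thesis .
qed

lemma hcomponent_Lgen_plus:
  "hcomponent n l (\<lambda>x. Lgen t j Y x + (1 - t) * Y x) F =
    (\<lambda>v. 1 * hcomponent n l (Lgen t j Y) F v + (1 - t) * hcomponent n l Y F v)"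
  unfolding hcomponent_lincomb[symmetric] by simp

lemma Psi_step_exchange_fixed:
  assumes F: "F \<in> cols n l" and j: "1 \<le> j" "j < n" and ti: "t * ti = 1" and e: "scol j F = F"
  shows "Psi_step n t l (\<lambda>x. Lgen t j Y x + (1 - t) * Y x) F =
    (\<lambda>x. Lgen t j (Psi_step n t l Y F) x + (1 - t) * Psi_step n t l Y F x)"
  unfolding Psi_step_def hcomponent_Lgen_plus
    hlinear_lincomb[OF hlinear_hmul hcomponent_in_Hn hcomponent_in_Hn]
  using Lgen_Psi_step_fixed[OF F j e ti] unfolding Psi_step_def by simp

lemma Psi_step_exchange_down:
  assumes F: "F \<in> cols n l" and j: "1 \<le> j" "j < n" and ti: "t * ti = 1"
    and a: "j \<notin> set F" "Suc j \<in> set F"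
  shows "Psi_step n t l (\<lambda>x. Lgen t j Y x + (1 - t) * Y x) F =
    (\<lambda>x. Lgen t j (Psi_step n t l Y (scol j F)) x + (1 - t) * Psi_step n t l Y (scol j F) x)"
proof -
  have "hcomponent n l (\<lambda>x. Lgen t j Y x + (1 - t) * Y x) F = hcomponent n l Y (scol j F)"
    unfolding hcomponent_Lgen_plus hcomponent_Lgen_down[OF F j a] by (auto simp: algebra_simps)
  then show ?thesis unfolding Psi_step_def using hmul_theta_down[OF F j a ti hcomponent_in_Hn] by simp
qed

lemma Psi_step_exchange_up:
  assumes F: "F \<in> cols n l" and j: "1 \<le> j" "j < n" and ti: "t * ti = 1"
    and a: "j \<in> set F" "Suc j \<notin> set F"
  shows "Psi_step n t l (\<lambda>x. Lgen t j Y x + (1 - t) * Y x) F =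
    (\<lambda>x. Lgen t j (Psi_step n t l Y (scol j F)) x + (1 - t) * Psi_step n t l Y F x)"
proof -
  have "hcomponent n l (\<lambda>x. Lgen t j Y x + (1 - t) * Y x) F =
      (\<lambda>v. t * hcomponent n l Y (scol j F) v + (1 - t) * hcomponent n l Y F v)"
    unfolding hcomponent_Lgen_plus hcomponent_Lgen_up[OF F j a] by simp
  then show ?thesis
    unfolding Psi_step_def Lgen_hmul_theta_up[OF F j a ti hcomponent_in_Hn]
    by (simp add: hlinear_lincomb[OF hlinear_hmul hcomponent_in_Hn hcomponent_in_Hn])
qed

text \<open>The exchange step: if \<open>X = t T\<^sub>j\<^sup>-\<^sup>1 Y\<close>, then for a column \<open>F\<close> the
  next step of the recursion moves \<open>t T\<^sub>j\<^sup>-\<^sup>1\<close> (or \<open>T\<^sub>j\<close>) to the front.\<close>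

lemma Psi_step_exchange:
  assumes F: "F \<in> cols n l" and j: "1 \<le> j" "j < n" and ti: "t * ti = 1"
    and X: "X = (\<lambda>x. Lgen t j Y x + (1 - t) * Y x)"
  shows "cle (scol j F) F \<Longrightarrow> Psi_step n t l X F =
           (\<lambda>x. Lgen t j (Psi_step n t l Y (scol j F)) x + (1 - t) * Psi_step n t l Y (scol j F) x)"
    and "cle F (scol j F) \<Longrightarrow> Psi_step n t l X F =
           (\<lambda>x. Lgen t j (Psi_step n t l Y (scol j F)) x + (1 - t) * Psi_step n t l Y F x)"
  using Psi_step_exchange_fixed[OF F j ti, of Y] Psi_step_exchange_down[OF F j ti, of Y]
    Psi_step_exchange_up[OF F j ti, of Y] scol_eq_self_iff[OF F j]
    not_cle_scol_left[OF F j] not_cle_scol_right[OF F j] unfolding X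
  by (metis (no_types, lifting))+

definition columns :: "nat \<Rightarrow> nat list list \<Rightarrow> bool" where
  "columns n S \<longleftrightarrow> (\<forall>C\<in>set S. C \<in> cols n (length C))"

lemma columns_Cons [simp]: "columns n (C # S) \<longleftrightarrow> C \<in> cols n (length C) \<and> columns n S"
  unfolding columns_def by simp

lemma columns_Nil [simp]: "columns n []"
  unfolding columns_def by simp

lemma columns_Cons_col: "C \<in> cols n l \<Longrightarrow> columns n S \<Longrightarrow> columns n (C # S)"
  using cols_length by simp

lemma one_l_in_Hn: "one_l n l \<in> Hn n"
  unfolding one_l_def Hn_def Stab_def by auto

lemma Psi_single: "Psi n t [C] = hmul n t (theta n t (ucol n C)) (one_l n (length C))"
  by (simp add: theta_def hmul_smult_left)

lemma Psi_Cons_Cons: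
  assumes C: "C \<in> cols n (length C)" and X: "Psi n t (D # S) \<in> Hn n"
  shows "Psi n t (C # D # S) = Psi_step n t (length C) (Psi n t (D # S)) C"
  using hdec_eq_hcomponent[OF X colsD(5)[OF C]] C
  by (simp add: Psi_step_def theta_def hmul_smult_left)

lemma Psi_in_Hn: "columns n S \<Longrightarrow> Psi n t S \<in> Hn n"
proof (induction n t S rule: Psi.induct)
  case (1 n t)
  then show ?case by (simp add: Hn_def)
next
  case (2 n t C)
  show ?case unfolding Psi_single by (rule hmul_in_Hn[OF one_l_in_Hn])
next
  case (3 n t C D S)
  then show ?case using Psi_Cons_Cons[of C n t D S] by (simp add: Psi_step_def hmul_in_Hn hcomponent_in_Hn)
qed

lemma Lgen_one_l:
  assumes k: "1 \<le> k" "k < n" "k \<noteq> l"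
  shows "Lgen t k (one_l n l) = (\<lambda>x. t * one_l n l x)"
  unfolding Lgen_def one_l_def using sref_comp_in_Stab_iff[OF k] by (auto simp: fun_eq_iff algebra_simps)

lemma Lgen_Psi_fixed:
  assumes S: "columns n S" and j: "1 \<le> j" "j < n" and ti: "t * ti = 1"
    and fixed: "\<forall>C\<in>set S. scol j C = C"
  shows "Lgen t j (Psi n t S) = (\<lambda>x. t * Psi n t S x)"
  using S j ti fixed
proof (induction n t S rule: Psi.induct)
  case (1 n t)
  then show ?case by (simp add: Lgen_def fun_eq_iff)
next
  case (2 n t F)
  then have F: "F \<in> cols n (length F)" and e: "scol j F = F" and j: "1 \<le> j" "j < n"
    and ti: "t * ti = 1" by simp_all
  obtain k where k: "1 \<le> k" "k < n" "k \<noteq> length F" and sc: "sref j \<circ> ucol n F = ucol n F \<circ> sref k"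
    and nd: "\<not> ldescent j (ucol n F)" "\<not> rdescent k (ucol n F)"
    using ucol_sref_commute[OF F j] scol_eq_self_iff[OF F j] e by metis
  show ?case
    unfolding Psi_single Lgen_hmul_theta_fixed[OF F j one_l_in_Hn ti k(1,2) sc nd] Lgen_one_l[OF k]
    by (rule hlinear_smult[OF hlinear_hmul one_l_in_Hn])
next
  case (3 n t F D S)
  then have F: "F \<in> cols n (length F)" and e: "scol j F = F" and DS: "columns n (D # S)"
    and j: "1 \<le> j" "j < n" and ti: "t * ti = 1"
    and IH: "Lgen t j (Psi n t (D # S)) = (\<lambda>x. t * Psi n t (D # S) x)" by simp_all
  show ?case
    unfolding Psi_Cons_Cons[OF F Psi_in_Hn[OF DS]] Lgen_Psi_step_fixed[OF F j e ti] IH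
    unfolding Psi_step_def hcomponent_lincomb[of _ _ t _ 0 "\<lambda>_. 0", simplified]
    by (rule hlinear_smult[OF hlinear_hmul hcomponent_in_Hn])
qed

lemma Psi_single_exchange:
  assumes E: "E \<in> cols n a" and j: "1 \<le> j" "j < n" and ti: "t * ti = 1" and c: "cle (scol j E) E"
  shows "Psi n t [E] = (\<lambda>x. Lgen t j (Psi n t [scol j E]) x + (1 - t) * Psi n t [scol j E] x)"
proof (cases "j \<in> set E \<longleftrightarrow> Suc j \<in> set E")
  case True
  then have e: "scol j E = E" using scol_eq_self_iff[OF E j] by simp
  have "Lgen t j (Psi n t [E]) = (\<lambda>x. t * Psi n t [E] x)"
    by (rule Lgen_Psi_fixed[OF _ j ti]) (use cols_length[OF E] e in simp_all)
  then show ?thesis unfolding e by (simp add: algebra_simps del: Psi.simps)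
next
  case False
  then have a: "j \<notin> set E" "Suc j \<in> set E" using not_cle_scol_left[OF E j] c by auto
  have "length (scol j E) = length E" using colsD(3)[OF scol_in_cols[OF E j]] colsD(3)[OF E] by simp
  then show ?thesis unfolding Psi_single using hmul_theta_down[OF E j a ti one_l_in_Hn] colsD(3)[OF E] by simp
qed

lemma Psi_Cons_exchange:
  assumes E: "E \<in> cols n a" and j: "1 \<le> j" "j < n" and ti: "t * ti = 1"
    and a: "j \<notin> set E" "Suc j \<in> set E" and DS: "columns n (D # S)"
    and fixed: "Lgen t j (Psi n t (D # S)) = (\<lambda>x. t * Psi n t (D # S) x)"
  shows "Psi n t (E # D # S) = (\<lambda>x. Lgen t j (Psi n t (scol j E # D # S)) x + (1 - t) * Psi n t (scol j E # D # S) x)"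
proof -
  have E': "E \<in> cols n (length E)" and sE: "scol j E \<in> cols n (length E)"
    using cols_length[OF E] scol_in_cols[OF E j] colsD(3)[OF E] by simp_all
  have len: "length (scol j E) = length E" using colsD(3)[OF sE] by simp
  have "Psi n t (D # S) = (\<lambda>x. Lgen t j (Psi n t (D # S)) x + (1 - t) * Psi n t (D # S) x)"
    unfolding fixed by (simp add: algebra_simps)
  from Psi_step_exchange(1)[OF E' j ti this cle_scol_left[OF E j a]]
  show ?thesis unfolding Psi_Cons_Cons[OF E' Psi_in_Hn[OF DS]] Psi_Cons_Cons[OF sE[folded len] Psi_in_Hn[OF DS]] len .
qed

lemma Psi_Cons_Cons_exchange:
  assumes F: "F \<in> cols n b" and j: "1 \<le> j" "j < n" and ti: "t * ti = 1"
    and ES: "columns n (E # S)" and ES': "columns n (scol j E # S)"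
    and exch: "Psi n t (E # S) = (\<lambda>x. Lgen t j (Psi n t (scol j E # S)) x + (1 - t) * Psi n t (scol j E # S) x)"
  shows "cle (scol j F) F \<Longrightarrow> Psi n t (F # E # S) =
           (\<lambda>x. t * hmul n t (hinv n t (hT (sref j))) (Psi n t (scol j F # scol j E # S)) x)"
    and "cle F (scol j F) \<Longrightarrow> Psi n t (F # E # S) =
           (\<lambda>x. hmul n t (hT (sref j)) (Psi n t (scol j F # scol j E # S)) x
                + (1 - t) * Psi n t (F # scol j E # S) x)"
proof -
  have F': "F \<in> cols n (length F)" and sF: "scol j F \<in> cols n (length F)"
    using cols_length[OF F] scol_in_cols[OF F j] colsD(3)[OF F] by simp_all
  have len: "length (scol j F) = length F" using colsD(3)[OF sF] by simp
  note step = Psi_step_exchange[OF F' j ti exch]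
  define Z where "Z = Psi n t (scol j F # scol j E # S)"
  have Z: "Z = Psi_step n t (length F) (Psi n t (scol j E # S)) (scol j F)"
    unfolding Z_def using Psi_Cons_Cons[OF sF[folded len] Psi_in_Hn[OF ES']] len by simp
  have ZH: "Z \<in> Hn n" unfolding Z_def by (rule Psi_in_Hn) (use ES' sF len in simp)
  have "(\<lambda>x. t * hmul n t (hinv n t (hT (sref j))) Z x) = hmul n t (Tplus t j) Z"
    unfolding hmul_smult_left[symmetric] t_hinv_hT_sref[OF j ti] ..
  then have hinv: "(\<lambda>x. t * hmul n t (hinv n t (hT (sref j))) Z x) = (\<lambda>x. Lgen t j Z x + (1 - t) * Z x)"
    unfolding hmul_Tplus_left[OF j ZH] .
  have PsiF: "Psi n t (F # E # S) = Psi_step n t (length F) (Psi n t (E # S)) F"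
    by (rule Psi_Cons_Cons[OF F' Psi_in_Hn[OF ES]])
  show "cle (scol j F) F \<Longrightarrow> Psi n t (F # E # S) =
           (\<lambda>x. t * hmul n t (hinv n t (hT (sref j))) (Psi n t (scol j F # scol j E # S)) x)"
    using step(1) unfolding PsiF Z_def[symmetric] hinv Z[symmetric] .
  show "cle F (scol j F) \<Longrightarrow> Psi n t (F # E # S) =
           (\<lambda>x. hmul n t (hT (sref j)) (Psi n t (scol j F # scol j E # S)) x
                + (1 - t) * Psi n t (F # scol j E # S) x)"
    using step(2) unfolding PsiF Psi_Cons_Cons[OF F' Psi_in_Hn[OF ES']]
      Z_def[symmetric] hmul_hT_sref_left[OF j ZH] Z[symmetric] .
qed

section \<open>The tableau \<open>T\<^sup>0\<^sub>\<mu>\<close>\<close>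

lemma T0_column:
  assumes "C \<in> set (T0 n mu)"
  obtains m where "C = [1..<Suc m]" "m \<le> card {i. i < n \<and> 1 \<le> mu ! i}" "m \<le> n"
proof -
  obtain k where k: "1 \<le> k" and C: "C = [1..<Suc (card {i. i < n \<and> k \<le> mu ! i})]"
    using assms unfolding T0_def by auto
  have "card {i. i < n \<and> k \<le> mu ! i} \<le> card {i. i < n \<and> 1 \<le> mu ! i}"
    using k by (intro card_mono) (auto intro: finite_subset[of _ "{..<n}"])
  moreover have "card {i. i < n \<and> 1 \<le> mu ! i} \<le> n"
    using card_mono[of "{..<n}" "{i. i < n \<and> 1 \<le> mu ! i}"] by auto
  ultimately show ?thesis using that C by auto
qed

lemma T0_Cons:
  assumes "T0 n mu = D # S"
  shows "D = [1..<Suc (card {i. i < n \<and> 1 \<le> mu ! i})]"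
proof -
  define M where "M = Max (insert 0 (set mu))"
  have "M \<noteq> 0"
  proof
    assume "M = 0"
    then show False using assms unfolding T0_def M_def[symmetric] by simp
  qed
  then have "[1..<Suc M] = 1 # [Suc 1..<Suc M]" by (simp add: upt_conv_Cons)
  then show ?thesis using assms unfolding T0_def M_def[symmetric] by (simp del: upt_Suc)
qed

lemma Suc_le_nth_if_sorted:
  assumes "sorted_wrt (<) E" "set E \<subseteq> {1..n}" "r < length E"
  shows "Suc r \<le> E ! r"
  using assms(3)
proof (induction r)
  case 0
  then show ?case using assms(2) nth_mem[OF 0] by force
next
  case (Suc r)
  then show ?case using sorted_wrt_nth_less[OF assms(1), of r "Suc r"] by simp
qed

text \<open>Semistandardness of \<open>E \<otimes> T\<^sup>0\<^sub>\<mu>\<close> forces \<open>1, \<dots>, \<mu>'\<^sub>1\<close> into \<open>E\<close>, so \<open>j \<notin> E\<close> lies beyond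
  every column of \<open>T\<^sup>0\<^sub>\<mu>\<close>, and \<open>s\<^sub>j\<close> fixes them all.\<close>

lemma scol_T0:
  assumes E: "E \<in> cols n a" and ss: "semistandard (E # T0 n mu)" and j: "1 \<le> j" "j < n" "j \<notin> set E"
    and C: "C \<in> set (T0 n mu)"
  shows "scol j C = C"
proof -
  obtain D S where T: "T0 n mu = D # S" using C by (cases "T0 n mu") auto
  define m1 where "m1 = card {i. i < n \<and> 1 \<le> mu ! i}"
  have D: "D = [1..<Suc m1]" using T0_Cons[OF T] unfolding m1_def .
  have "Suc 0 < length (E # T0 n mu)" using T by simp
  then have "length D \<le> length E \<and> (\<forall>r < length D. E ! r \<le> D ! r)"
    using ss T unfolding semistandard_def by fastforce
  then have m1E: "m1 \<le> length E" and le: "\<And>r. r < m1 \<Longrightarrow> E ! r \<le> Suc r"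
    unfolding D by (auto simp del: upt_Suc)
  have inE: "Suc r \<in> set E" if r: "r < m1" for r
  proof -
    have "E ! r = Suc r" using le[OF r] Suc_le_nth_if_sorted[OF colsD(1,4)[OF E], of r] m1E r by simp
    then show ?thesis using nth_mem[of r E] m1E r by simp
  qed
  have "m1 < j"
  proof (rule ccontr)
    assume "\<not> m1 < j"
    then have "j - 1 < m1" using j by simp
    then have "Suc (j - 1) \<in> set E" by (rule inE)
    then show False using j by simp
  qed
  moreover obtain m where "C = [1..<Suc m]" "m \<le> m1" "m \<le> n" using T0_column[OF C] unfolding m1_def .
  moreover have "C \<in> cols n m" if "C = [1..<Suc m]" "m \<le> n"
    using that unfolding cols_def by (auto simp del: upt_Suc)
  ultimately show ?thesis using scol_eq_self_iff[of C n m j] j(1,2) by (auto simp del: upt_Suc)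
qed

lemma columns_T0: "columns n (T0 n mu)"
  unfolding columns_def
proof
  fix C assume "C \<in> set (T0 n mu)"
  then obtain m where "C = [1..<Suc m]" "m \<le> n" by (rule T0_column)
  then show "C \<in> cols n (length C)" unfolding cols_def by (auto simp del: upt_Suc)
qed

lemma Psi_Cons_T0_exchange:
  assumes E: "E \<in> cols n a" and ss: "semistandard (E # T0 n mu)" and j: "1 \<le> j" "j < n"
    and ja: "j \<notin> set E" "Suc j \<in> set E" and ti: "t * ti = 1"
  shows "Psi n t (E # T0 n mu) =
    (\<lambda>x. Lgen t j (Psi n t (scol j E # T0 n mu)) x + (1 - t) * Psi n t (scol j E # T0 n mu) x)"
proof (cases "T0 n mu")
  case Nil
  then show ?thesis using Psi_single_exchange[OF E j ti cle_scol_left[OF E j ja]] by simp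
next
  case (Cons D S)
  have "Lgen t j (Psi n t (T0 n mu)) = (\<lambda>x. t * Psi n t (T0 n mu) x)"
    using Lgen_Psi_fixed[OF columns_T0 j ti] scol_T0[OF E ss j ja(1)] by blast
  then show ?thesis using Psi_Cons_exchange[OF E j ti ja, of D S] columns_T0[of n mu] Cons by simp
qed

lemma Psi_exchange_T0:
  assumes ti: "t * ti = 1" and E: "E \<in> cols n a" and F: "F \<in> cols n b" and j: "1 \<le> j" "j < n"
    and ss: "semistandard (E # T0 n mu)" and ja: "j \<notin> set E" "Suc j \<in> set E"
  shows "cle (scol j F) F \<Longrightarrow> Psi n t (F # E # T0 n mu) =
           (\<lambda>x. t * hmul n t (hinv n t (hT (sref j))) (Psi n t (scol j F # scol j E # T0 n mu)) x)"
    and "cle F (scol j F) \<Longrightarrow> Psi n t (F # E # T0 n mu) =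
           (\<lambda>x. hmul n t (hT (sref j)) (Psi n t (scol j F # scol j E # T0 n mu)) x
                + (1 - t) * Psi n t (F # scol j E # T0 n mu) x)"
  by (fact Psi_Cons_Cons_exchange[OF F j ti columns_Cons_col[OF E columns_T0]
        columns_Cons_col[OF scol_in_cols[OF E j] columns_T0] Psi_Cons_T0_exchange[OF E ss j ja ti]])+

lemma Psi_exchange_two_columns:
  assumes ti: "t * ti = 1" and E: "E \<in> cols n a" and F: "F \<in> cols n b" and j: "1 \<le> j" "j < n"
    and c: "cle (scol j E) E"
  shows "cle (scol j F) F \<Longrightarrow> Psi n t [F, E] =
           (\<lambda>x. t * hmul n t (hinv n t (hT (sref j))) (Psi n t [scol j F, scol j E]) x)"
    and "cle F (scol j F) \<Longrightarrow> Psi n t [F, E] =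
           (\<lambda>x. hmul n t (hT (sref j)) (Psi n t [scol j F, scol j E]) x + (1 - t) * Psi n t [F, scol j E] x)"
  by (fact Psi_Cons_Cons_exchange[OF F j ti columns_Cons_col[OF E columns_Nil]
        columns_Cons_col[OF scol_in_cols[OF E j] columns_Nil] Psi_single_exchange[OF E j ti c]])+

theorem proposition6p5:
  fixes t :: "'a::comm_ring_1" and n :: nat
  assumes "t dvd 1"
  shows "(\<forall>mu a b E F j.
            dominant n mu \<and> b \<le> n \<and> a \<le> b \<and> lenpart mu \<le> a \<and>
            E \<in> cols n a \<and> F \<in> cols n b \<and> semistandard (E # T0 n mu) \<and>
            1 \<le> j \<and> j < n \<and> j \<notin> set E \<and> Suc j \<in> set E \<longrightarrow>
            (cle (scol j F) F \<longrightarrow>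
               Psi n t (F # E # T0 n mu) =
               (\<lambda>x. t * hmul n t (hinv n t (hT (sref j)))
                          (Psi n t (scol j F # scol j E # T0 n mu)) x)) \<and>
            (cle F (scol j F) \<longrightarrow>
               Psi n t (F # E # T0 n mu) =
               (\<lambda>x. hmul n t (hT (sref j)) (Psi n t (scol j F # scol j E # T0 n mu)) x
                    + (1 - t) * Psi n t (F # scol j E # T0 n mu) x)))
       \<and>
         (\<forall>a b E F j.
            1 \<le> a \<and> a \<le> b \<and> b \<le> n \<and>
            E \<in> cols n a \<and> F \<in> cols n b \<and>
            1 \<le> j \<and> j < n \<and> cle (scol j E) E \<longrightarrow>
            (cle (scol j F) F \<longrightarrow>
               Psi n t [F, E] =
               (\<lambda>x. t * hmul n t (hinv n t (hT (sref j))) (Psi n t [scol j F, scol j E]) x)) \<and>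
            (cle F (scol j F) \<longrightarrow>
               Psi n t [F, E] =
               (\<lambda>x. hmul n t (hT (sref j)) (Psi n t [scol j F, scol j E]) x
                    + (1 - t) * Psi n t [F, scol j E] x)))"
proof -
  obtain ti where ti: "t * ti = 1" using assms by (metis dvd_def)
  show ?thesis
    by (intro conjI allI impI; elim conjE;
        rule Psi_exchange_T0[OF ti] Psi_exchange_two_columns[OF ti]; assumption)
qed

end
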